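(* Let $n\ge 3$ and let $(\mathcal X,w)$ be a fully symmetric finite weighted set in $\mathbb R^n\setminus\{0\}$ with norm spectrum $R$, whose weight function takes a constant value $w_r$ on each layer $\mathcal X_r=\mathcal X\cap S^{n-1}_r$. Define $f_{4,2}=x_1^4-6x_1^2x_2^2+x_2^4$, $f_{6,3}=2(x_1^6+x_2^6+x_3^6)-15(x_1^4x_2^2+x_1^2x_2^4+x_1^4x_3^2+x_1^2x_3^4+x_2^4x_3^2+x_2^2x_3^4)+180x_1^2x_2^2x_3^2$, $f_{8,2}=x_1^8-28x_1^6x_2^2+70x_1^4x_2^4-28x_1^2x_2^6+x_2^8$, $f_{8,4}=3\sum_{i=1}^4x_i^8-28\sum_{i\ne j}x_i^6x_j^2+210\sum x_i^4x_j^2x_k^2-3780x_1^2x_2^2x_3^2x_4^2$, where the second sum is over ordered pairs of distinct $i,j\in\{1,2,3,4\}$ and the third over $i\in\{1,2,3,4\}$ and unordered pairs $\{j,k\}\subseteq\{1,2,3,4\}\setminus\{i\}$. Then: 1. $(\mathcal X,w)$ is at least a Euclidean $3$-design. 2. $(\mathcal X,w)$ is a Euclidean $5$-design iff $\sum_{r\in R}\sum_{x\in\mathcal X_r}w_rf_{4,2}(x)=0$. 3. $(\mathcal X,w)$ is a Euclidean $7$-design iff $\sum_{r\in R}\sum_{x\in\mathcal X_r}w_r r^{2s_1}f_{4,2}(x)=0$ for $s_1=0,1$ and $\sum_{r\in R}\sum_{x\in\mathcal X_r}w_rf_{6,3}(x)=0$. 4. $(\mathcal X,w)$ is a Euclidean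 $9$-design iff $\sum_{r\in R}\sum_{x\in\mathcal X_r}w_r r^{2s_1}f_{4,2}(x)=0$ for $s_1=0,1,2$, $\sum_{r\in R}\sum_{x\in\mathcal X_r}w_r r^{2s_2}f_{6,3}(x)=0$ for $s_2=0,1$, $\sum_{r\in R}\sum_{x\in\mathcal X_r}w_rf_{8,2}(x)=0$, and $\sum_{r\in R}\sum_{x\in\mathcal X_r}w_rf_{8,4}(x)=0$.
   Context: The hyperoctahedral group $H$ is the subgroup of $O(n)$ generated by all coordinate transpositions and all reflections in coordinate hyperplanes. A weighted set $(\mathcal X,w)$ (finite $\mathcal X\subset\mathbb R^n$, positive weights) is fully symmetric if $\mathcal X^g=\mathcal X$ for all $g\in H$ and $w(x)=w(y)$ whenever $x=y^g$ for some $g\in H$. Norm spectrum: $R=\{\|x\|:x\in\mathcal X\}$; $W_r=\sum_{x\in\mathcal X_r}w(x)$. $(\mathcal X,w)$ is a Euclidean $t$-design if $\sum_{r\in R}W_r\overline f_{S^{n-1}_r}=\sum_{x\in\mathcal X}w(x)f(x)$ for every real polynomial $f$ of total degree at most $t$, where $\overline f_{S^{n-1}_r}$ is the average of $f$ over the sphere of radius $r$ centered at the origin. The polynomials above are evaluated at $x\in\mathbb R^n$ through its first two, three or four coordinates. *)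

theory Defs
  imports "HOL-Analysis.Analysis"
begin

text \<open>Points of R^n are vectors of type real^'n, where the index type 'n is finite and
linearly ordered; the ordering fixes which coordinates are x_1, x_2, ...
crd k x is the (k+1)-th coordinate (0-based index k).\<close>

definition crd :: "nat \<Rightarrow> real^'n::{finite,linorder} \<Rightarrow> real" where
  "crd k x = x $ (sorted_list_of_set (UNIV :: 'n set) ! k)"

text \<open>The group generated by all coordinate transpositions and all reflections in
coordinate hyperplanes (the generators are involutions, so the monoid they generate
under composition is the group they generate).\<close>

definition coord_transp :: "'n::finite \<Rightarrow> 'n \<Rightarrow> real^'n \<Rightarrow> real^'n" where
  "coord_transp a b x = (\<chi> i. x $ (if i = a then b else if i = b then a else i))"

definition coord_refl :: "'n::finite \<Rightarrow> real^'n \<Rightarrow> real^'n" where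
  "coord_refl a x = (\<chi> i. if i = a then - (x $ i) else x $ i)"

inductive_set hyperoct :: "(real^'n::finite \<Rightarrow> real^'n) set" where
  hyp_id: "id \<in> hyperoct"
| hyp_transp: "g \<in> hyperoct \<Longrightarrow> coord_transp a b \<circ> g \<in> hyperoct"
| hyp_refl: "g \<in> hyperoct \<Longrightarrow> coord_refl a \<circ> g \<in> hyperoct"

definition fully_symmetric :: "(real^'n::finite) set \<Rightarrow> (real^'n \<Rightarrow> real) \<Rightarrow> bool" where
  "fully_symmetric X w \<longleftrightarrow>
     (\<forall>g\<in>hyperoct. g ` X = X) \<and>
     (\<forall>g\<in>hyperoct. \<forall>x\<in>X. \<forall>y\<in>X. x = g y \<longrightarrow> w x = w y)"

definition poly_deg_le :: "nat \<Rightarrow> (real^'n::finite \<Rightarrow> real) \<Rightarrow> bool" where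
  "poly_deg_le t f \<longleftrightarrow>
     (\<exists>(A :: ('n \<Rightarrow> nat) set) (c :: ('n \<Rightarrow> nat) \<Rightarrow> real).
        finite A \<and> (\<forall>\<alpha>\<in>A. (\<Sum>i\<in>UNIV. \<alpha> i) \<le> t) \<and>
        f = (\<lambda>x. \<Sum>\<alpha>\<in>A. c \<alpha> * (\<Prod>i\<in>UNIV. (x $ i) ^ \<alpha> i)))"

text \<open>The normalized surface measure
on the unit sphere is the image of the normalized Lebesgue measure on the unit ball
under x \<mapsto> x/|x| (cone measure), which we use as definition.\<close>

definition sphere_avg :: "real \<Rightarrow> (real^'n::finite \<Rightarrow> real) \<Rightarrow> real" where
  "sphere_avg r f =
     integral (ball 0 1) (\<lambda>x. f ((r / norm x) *\<^sub>R x)) / measure lebesgue (ball (0::real^'n) 1)"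

definition norm_spectrum :: "(real^'n::finite) set \<Rightarrow> real set" where
  "norm_spectrum X = norm ` X"

definition layer :: "(real^'n::finite) set \<Rightarrow> real \<Rightarrow> (real^'n) set" where
  "layer X r = {x \<in> X. norm x = r}"

definition layer_weight :: "(real^'n::finite) set \<Rightarrow> (real^'n \<Rightarrow> real) \<Rightarrow> real \<Rightarrow> real" where
  "layer_weight X w r = (\<Sum>x\<in>layer X r. w x)"

definition euclidean_design ::
    "(real^'n::finite) set \<Rightarrow> (real^'n \<Rightarrow> real) \<Rightarrow> nat \<Rightarrow> bool" where
  "euclidean_design X w t \<longleftrightarrow>
     (\<forall>f. poly_deg_le t f \<longrightarrow>
        (\<Sum>r\<in>norm_spectrum X. layer_weight X w r * sphere_avg r f) = (\<Sum>x\<in>X. w x * f x))"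

definition f42 :: "real^'n::{finite,linorder} \<Rightarrow> real" where
  "f42 x = (let x1 = crd 0 x; x2 = crd 1 x in x1^4 - 6 * x1^2 * x2^2 + x2^4)"

definition f63 :: "real^'n::{finite,linorder} \<Rightarrow> real" where
  "f63 x = (let x1 = crd 0 x; x2 = crd 1 x; x3 = crd 2 x in
     2 * (x1^6 + x2^6 + x3^6)
     - 15 * (x1^4 * x2^2 + x1^2 * x2^4 + x1^4 * x3^2 + x1^2 * x3^4 + x2^4 * x3^2 + x2^2 * x3^4)
     + 180 * x1^2 * x2^2 * x3^2)"

definition f82 :: "real^'n::{finite,linorder} \<Rightarrow> real" where
  "f82 x = (let x1 = crd 0 x; x2 = crd 1 x in
     x1^8 - 28 * x1^6 * x2^2 + 70 * x1^4 * x2^4 - 28 * x1^2 * x2^6 + x2^8)"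

text \<open>Indices 0..3 stand for x_1..x_4. The second sum runs over ordered pairs (i,j),
i \<noteq> j; the third over i and unordered pairs {j,k} (j<k) not containing i.\<close>

definition f84 :: "real^'n::{finite,linorder} \<Rightarrow> real" where
  "f84 x =
     3 * (\<Sum>i<4. crd i x ^ 8)
     - 28 * (\<Sum>i<4. \<Sum>j<4. if i \<noteq> j then crd i x ^ 6 * crd j x ^ 2 else 0)
     + 210 * (\<Sum>i<4. \<Sum>j<4. \<Sum>k<4.
                 if j < k \<and> j \<noteq> i \<and> k \<noteq> i then crd i x ^ 4 * crd j x ^ 2 * crd k x ^ 2 else 0)
     - 3780 * crd 0 x ^ 2 * crd 1 x ^ 2 * crd 2 x ^ 2 * crd 3 x ^ 2"

definition moment :: "(real^'n::finite) set \<Rightarrow> (real^'n \<Rightarrow> real) \<Rightarrow> nat \<Rightarrow> (real^'n \<Rightarrow> real) \<Rightarrow> real" where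
  "moment X w s f = (\<Sum>r\<in>norm_spectrum X. \<Sum>x\<in>layer X r. w x * r ^ (2 * s) * f x)"

end

theory Submission
  imports Defs
begin

text \<open>
  Write D_s(f) = \<Sum>_{x \<in> X} w(x) |x|^(2s) (f(x) - avg_{|x|} f), so that X is a t-design iff D_0
  vanishes on all monomials of degree at most t. Sphere averages are invariant under orthogonal
  maps and (X, w) under the hyperoctahedral group; hence D_s(x^\<alpha>) vanishes if some exponent is
  odd, and otherwise depends only on the multiset of exponents. Since |x|^2 = x_1^2 + ... + x_n^2,
  D_(s+1)(x^\<alpha>) is the sum over i of D_s(x^\<alpha> x_i^2), which yields linear recurrences among these
  values; in degree at most 3 they force everything to vanish.

  The test polynomials have vanishing sphere averages: this follows from the invariance of averages
  under a rotation in the (x_1, x_2)-plane by an angle \<theta> with cos 4\<theta> \<noteq> 1. Their moments are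
  therefore linear combinations of the values D_s(x^\<alpha>), and together with the recurrences the
  moment conditions form linear systems whose determinants are positive for n \<ge> 3, so that
  their only solution is zero.
\<close>

section \<open>Linear maps preserving Lebesgue measure\<close>

text \<open>The library proves that orthogonal maps preserve Lebesgue measure only for index types of
  class wellorder (measure_orthogonal_image), while here the index type is merely a finite linear
  order. Measure preservation is therefore verified directly for the maps that are needed:
  coordinate reflections, and plane rotations written as products of shears.\<close>

definition lebesgue_scaling :: "real \<Rightarrow> (real^'n::finite \<Rightarrow> real^'n) \<Rightarrow> bool" where
  "lebesgue_scaling k T \<longleftrightarrow>
     (\<forall>S \<in> lmeasurable. T ` S \<in> lmeasurable \<and> measure lebesgue (T ` S) = k * measure lebesgue S)"

lemma lebesgue_scalingI:
  fixes T :: "real^'n::finite \<Rightarrow> real^'n"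
  assumes "linear T" and "\<And>a b. measure lebesgue (T ` cbox a b) = k * measure lebesgue (cbox a b)"
  shows "lebesgue_scaling k T"
  unfolding lebesgue_scaling_def
proof
  fix S :: "(real^'n) set"
  assume "S \<in> lmeasurable"
  with measure_linear_sufficient[OF assms(1), of S k] assms(2)
  show "T ` S \<in> lmeasurable \<and> measure lebesgue (T ` S) = k * measure lebesgue S"
    by simp
qed

lemma lebesgue_scaling_compose:
  assumes "lebesgue_scaling k S" and "lebesgue_scaling l T"
  shows "lebesgue_scaling (k * l) (S \<circ> T)"
  using assms unfolding lebesgue_scaling_def image_comp[symmetric] by (auto simp del: image_image)

lemma lebesgue_scaling_id: "lebesgue_scaling 1 (\<lambda>x. x)"
  by (simp add: lebesgue_scaling_def)

lemma lebesgue_scaling_stretch: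
  fixes c :: "'n::finite \<Rightarrow> real"
  shows "lebesgue_scaling \<bar>prod c UNIV\<bar> (\<lambda>x::real^'n. \<chi> k. c k * x$k)"
  unfolding lebesgue_scaling_def by (simp add: measurable_stretch measure_stretch)

lemma lebesgue_scaling_unit_shear:
  fixes m n :: "'n::finite"
  assumes "m \<noteq> n"
  shows "lebesgue_scaling 1 (\<lambda>x::real^'n. \<chi> i. if i = m then x$m + x$n else x$i)"
    (is "lebesgue_scaling 1 ?f")
proof (rule lebesgue_scalingI)
  show lin: "linear ?f"
    by (rule linearI) (auto simp: vec_eq_iff algebra_simps)
  fix a b :: "real^'n"
  show "measure lebesgue (?f ` cbox a b) = 1 * measure lebesgue (cbox a b)"
  proof (cases "cbox a b = {}")
    case False
    define c :: "real^'n" where "c = (\<chi> i. if i = n then - (a$n) else 0)"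
    have "?f ` cbox (c + a) (c + b) = (+) (?f c) ` ?f ` cbox a b"
      by (simp only: cbox_translation image_image linear_add[OF lin])
    then have "measure lebesgue (?f ` cbox a b) = measure lebesgue (?f ` cbox (c + a) (c + b))"
      by (simp only: measure_translation)
    also have "\<dots> = measure lebesgue (cbox (c + a) (c + b))"
    proof (rule measure_shear_interval[OF assms])
      show "cbox (c + a) (c + b) \<noteq> {}"
        using False by (simp only: cbox_translation image_is_empty simp_thms)
    qed (simp add: c_def)
    also have "\<dots> = measure lebesgue (cbox a b)"
      by (simp only: cbox_translation measure_translation)
    finally show ?thesis by simp
  qed simp
qed

definition shear :: "'n::finite \<Rightarrow> 'n \<Rightarrow> real \<Rightarrow> real^'n \<Rightarrow> real^'n" where
  "shear m n t x = (\<chi> i. if i = m then x$m + t * x$n else x$i)"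

lemma lebesgue_scaling_shear:
  fixes m n :: "'n::finite"
  assumes "m \<noteq> n"
  shows "lebesgue_scaling 1 (shear m n t)"
proof (cases "t = 0")
  case True
  then have "shear m n t = (\<lambda>x. \<chi> k. 1 * x$k)"
    by (simp add: shear_def fun_eq_iff vec_eq_iff)
  then show ?thesis
    using lebesgue_scaling_stretch[of "\<lambda>_. 1"] by simp
next
  case False
  define stretch :: "real \<Rightarrow> real^'n \<Rightarrow> real^'n" where
    "stretch u = (\<lambda>x. \<chi> k. (if k = n then u else 1) * x$k)" for u
  have "lebesgue_scaling \<bar>u\<bar> (stretch u)" for u
    using lebesgue_scaling_stretch[of "\<lambda>k. if k = n then u else 1"]
    by (simp add: stretch_def prod.delta)
  then have "lebesgue_scaling (\<bar>1 / t\<bar> * 1 * \<bar>t\<bar>)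
      (stretch (1 / t) \<circ> (\<lambda>x. \<chi> i. if i = m then x$m + x$n else x$i) \<circ> stretch t)"
    by (intro lebesgue_scaling_compose lebesgue_scaling_unit_shear assms)
  moreover have "stretch (1 / t) \<circ> (\<lambda>x. \<chi> i. if i = m then x$m + x$n else x$i) \<circ> stretch t = shear m n t"
    using False assms by (simp add: shear_def stretch_def fun_eq_iff vec_eq_iff)
  ultimately show ?thesis
    using False by (simp add: abs_mult[symmetric])
qed

definition plane_rotation :: "'n::finite \<Rightarrow> 'n \<Rightarrow> real \<Rightarrow> real \<Rightarrow> real^'n \<Rightarrow> real^'n" where
  "plane_rotation a b c s x =
     (\<chi> i. if i = a then c * x$a - s * x$b else if i = b then s * x$a + c * x$b else x$i)"

lemma plane_rotation_eq_shears:
  fixes a b :: "'n::finite"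
  assumes "a \<noteq> b" and "c\<^sup>2 + s\<^sup>2 = 1" and "s \<noteq> 0"
  shows "plane_rotation a b c s = shear a b ((c - 1) / s) \<circ> shear b a s \<circ> shear a b ((c - 1) / s)"
proof -
  define p where "p = (c - 1) / s"
  have ps: "p * s = c - 1"
    using assms(3) by (simp add: p_def)
  have pc: "p * (1 + c) = - s"
  proof -
    have "p * (1 + c) * s = (- s) * s"
      using \<open>p * s = c - 1\<close> assms(2) by algebra
    then show ?thesis
      using mult_right_cancel[OF assms(3)] by blast
  qed
  have "c * x$a - s * x$b = x$a + p * x$b + p * (x$b + s * (x$a + p * x$b))" for x :: "real^'n"
    using ps pc by algebra
  moreover have "s * x$a + c * x$b = x$b + s * (x$a + p * x$b)" for x :: "real^'n"
    using ps by algebra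
  ultimately show ?thesis
    using assms(1) by (simp add: plane_rotation_def shear_def p_def fun_eq_iff vec_eq_iff)
qed

lemma lebesgue_scaling_plane_rotation:
  fixes a b :: "'n::finite"
  assumes "a \<noteq> b" and "c\<^sup>2 + s\<^sup>2 = 1"
  shows "lebesgue_scaling 1 (plane_rotation a b c s)"
proof (cases "s = 0")
  case True
  then have "plane_rotation a b c s = (\<lambda>x. \<chi> k. (if k = a \<or> k = b then c else 1) * x$k)"
    using assms(1) by (auto simp: plane_rotation_def fun_eq_iff vec_eq_iff)
  moreover have "(\<Prod>k\<in>UNIV. if k = a \<or> k = b then c else 1) = (\<Prod>k\<in>{a, b}. c)"
    by (rule prod.mono_neutral_cong_right) auto
  then have "\<bar>\<Prod>k\<in>UNIV. if k = a \<or> k = b then c else 1\<bar> = 1"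
    using assms True by (simp add: abs_mult_self_eq power2_eq_square)
  ultimately show ?thesis
    using lebesgue_scaling_stretch by metis
next
  case False
  then show ?thesis
    using lebesgue_scaling_compose lebesgue_scaling_shear assms
    by (metis plane_rotation_eq_shears mult_1)
qed

lemma sum_UNIV_remove2:
  fixes f :: "'n::finite \<Rightarrow> 'a::comm_monoid_add"
  assumes "a \<noteq> b"
  shows "(\<Sum>i\<in>UNIV. f i) = f a + f b + (\<Sum>i\<in>-{a, b}. f i)"
  using sum.subset_diff[of "{a, b}" UNIV f] assms by (simp add: Compl_eq_Diff_UNIV add.commute)

lemma orthogonal_transformation_plane_rotation:
  fixes a b :: "'n::finite"
  assumes "a \<noteq> b" and "c\<^sup>2 + s\<^sup>2 = 1"
  shows "orthogonal_transformation (plane_rotation a b c s)"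
  unfolding orthogonal_transformation
proof (intro conjI allI)
  show "linear (plane_rotation a b c s)"
    unfolding plane_rotation_def by (rule linearI) (auto simp: vec_eq_iff algebra_simps)
  fix x :: "real^'n"
  have "(c * x$a - s * x$b)\<^sup>2 + (s * x$a + c * x$b)\<^sup>2 = (x$a)\<^sup>2 + (x$b)\<^sup>2"
    using assms(2) by algebra
  then have "plane_rotation a b c s x \<bullet> plane_rotation a b c s x = x \<bullet> x"
    using assms(1) by (simp add: inner_vec_def sum_UNIV_remove2[of a b] plane_rotation_def power2_eq_square)
  then show "norm (plane_rotation a b c s x) = norm x"
    by (simp add: norm_eq_sqrt_inner)
qed

lemma coord_refl_eq_stretch: "coord_refl a = (\<lambda>x. \<chi> k. (if k = a then -1 else 1) * x$k)"
  by (simp add: coord_refl_def fun_eq_iff vec_eq_iff)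

lemma lebesgue_scaling_coord_refl: "lebesgue_scaling 1 (coord_refl a :: real^'n::finite \<Rightarrow> real^'n)"
  using lebesgue_scaling_stretch[of "\<lambda>k. if k = a then -1 else 1"]
  by (simp add: coord_refl_eq_stretch prod.delta)

lemma orthogonal_transformation_coord_refl:
  "orthogonal_transformation (coord_refl a :: real^'n::finite \<Rightarrow> real^'n)"
  unfolding orthogonal_transformation
proof (intro conjI allI)
  show "linear (coord_refl a :: real^'n \<Rightarrow> real^'n)"
    unfolding coord_refl_eq_stretch by (rule linearI) (auto simp: vec_eq_iff algebra_simps)
  fix x :: "real^'n"
  have "coord_refl a x \<bullet> coord_refl a x = x \<bullet> x"
    unfolding inner_vec_def by (rule sum.cong) (auto simp: coord_refl_def)
  then show "norm (coord_refl a x) = norm x"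
    by (simp add: norm_eq_sqrt_inner)
qed

lemma coord_transp_eq_refl_rotation:
  "a \<noteq> b \<Longrightarrow> coord_transp a b = coord_refl a \<circ> plane_rotation a b 0 1"
  by (auto simp: coord_transp_def coord_refl_def plane_rotation_def fun_eq_iff vec_eq_iff)

lemma coord_transp_same: "coord_transp a a = (\<lambda>x. x)"
  by (simp add: coord_transp_def fun_eq_iff vec_eq_iff)

lemma lebesgue_scaling_coord_transp: "lebesgue_scaling 1 (coord_transp a b :: real^'n::finite \<Rightarrow> real^'n)"
proof (cases "a = b")
  case False
  then show ?thesis
    using lebesgue_scaling_compose[OF lebesgue_scaling_coord_refl
        lebesgue_scaling_plane_rotation[OF False, of 0 1]]
    by (simp add: coord_transp_eq_refl_rotation)
qed (simp add: coord_transp_same lebesgue_scaling_id)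

lemma orthogonal_transformation_coord_transp:
  "orthogonal_transformation (coord_transp a b :: real^'n::finite \<Rightarrow> real^'n)"
proof (cases "a = b")
  case False
  then show ?thesis
    using orthogonal_transformation_compose[OF orthogonal_transformation_coord_refl
        orthogonal_transformation_plane_rotation[OF False, of 0 1]]
    by (simp add: coord_transp_eq_refl_rotation)
qed (simp add: coord_transp_same)

lemma coord_transp_hyperoct: "coord_transp a b \<in> hyperoct"
  using hyperoct.hyp_transp[OF hyperoct.hyp_id] by simp

lemma coord_refl_hyperoct: "coord_refl a \<in> hyperoct"
  using hyperoct.hyp_refl[OF hyperoct.hyp_id] by simp

lemma hyperoct_compose: "g \<in> hyperoct \<Longrightarrow> h \<in> hyperoct \<Longrightarrow> g \<circ> h \<in> hyperoct"
  by (induction rule: hyperoct.induct) (auto intro: hyperoct.intros simp: comp_assoc)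

lemma
  assumes "g \<in> hyperoct"
  shows lebesgue_scaling_hyperoct: "lebesgue_scaling 1 g"
    and orthogonal_transformation_hyperoct: "orthogonal_transformation g"
  using assms
  by (induction rule: hyperoct.induct)
    (auto intro: lebesgue_scaling_compose[where k = 1 and l = 1, simplified]
       orthogonal_transformation_compose lebesgue_scaling_coord_transp lebesgue_scaling_coord_refl
       orthogonal_transformation_coord_transp orthogonal_transformation_coord_refl
     simp: id_def lebesgue_scaling_id)

lemma distr_lborel_orthogonal_transformation:
  fixes T :: "real^'n::finite \<Rightarrow> real^'n"
  assumes T: "orthogonal_transformation T" and "lebesgue_scaling 1 T"
  shows "distr lborel borel T = lborel"
proof (rule lborel_eqI[symmetric])
  have cont: "continuous (at x) T" for x
    using T by (simp add: linear_continuous_at linear_linear orthogonal_transformation_linear)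
  then have meas: "T \<in> borel_measurable lborel"
    by (simp add: borel_measurable_continuous_onI continuous_at_imp_continuous_on)
  fix l u :: "real^'n"
  assume lu: "\<And>b. b \<in> Basis \<Longrightarrow> l \<bullet> b \<le> u \<bullet> b"
  define P where "P = T -` box l u"
  have "open P"
    unfolding P_def by (rule continuous_open_vimage[OF open_box cont])
  moreover have "bounded P"
  proof -
    obtain B where "\<And>y. y \<in> box l u \<Longrightarrow> norm y \<le> B"
      using bounded_box bounded_iff by metis
    then show ?thesis
      unfolding P_def bounded_iff by (metis orthogonal_transformation_norm[OF T] vimageE)
  qed
  ultimately have P: "P \<in> lmeasurable" "P \<in> sets borel"
    by (auto intro: lmeasurable_open)
  have TP: "T ` P = box l u"
    unfolding P_def using orthogonal_transformation_surj[OF T] by (simp add: surj_image_vimage_eq)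
  have "emeasure (distr lborel borel T) (box l u) = emeasure lborel P"
    unfolding P_def by (subst emeasure_distr[OF meas]) auto
  also have "\<dots> = measure lebesgue P"
    using P emeasure_bounded_finite[OF \<open>bounded P\<close>] by (simp add: emeasure_eq_ennreal_measure)
  also have "\<dots> = measure lebesgue (box l u)"
    using assms(2) P(1) TP unfolding lebesgue_scaling_def by (metis mult_1)
  also have "\<dots> = (\<Prod>b\<in>Basis. (u - l) \<bullet> b)"
    using lu by (simp add: measure_lborel_box_eq)
  finally show "emeasure (distr lborel borel T) (box l u) = (\<Prod>b\<in>Basis. (u - l) \<bullet> b)" .
qed simp

section \<open>Sphere averages\<close>

text \<open>sphere_avg is a Henstock-Kurzweil integral over the unit ball; as a Lebesgue integral over
  lborel it becomes accessible to linearity and to the transformation formula integral_distr.\<close>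

definition sphere_integrand :: "real \<Rightarrow> (real^'n::finite \<Rightarrow> real) \<Rightarrow> real^'n \<Rightarrow> real" where
  "sphere_integrand r f x = (if x \<in> ball 0 1 then f ((r / norm x) *\<^sub>R x) else 0)"

lemma borel_measurable_sphere_integrand:
  fixes f :: "real^'n::finite \<Rightarrow> real"
  assumes "continuous_on UNIV f"
  shows "sphere_integrand r f \<in> borel_measurable borel"
proof -
  have "(\<lambda>x::real^'n. (r / norm x) *\<^sub>R x) \<in> borel_measurable borel"
    by measurable
  then have "(\<lambda>x. f ((r / norm x) *\<^sub>R x)) \<in> borel_measurable borel"
    using measurable_compose borel_measurable_continuous_onI[OF assms] by blast
  then show ?thesis
    unfolding sphere_integrand_def by (intro measurable_If_set) auto
qed

lemma integrable_sphere_integrand: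
  fixes f :: "real^'n::finite \<Rightarrow> real"
  assumes "continuous_on UNIV f"
  shows "integrable lborel (sphere_integrand r f)"
proof -
  have "compact (f ` cball 0 \<bar>r\<bar>)"
    by (rule compact_continuous_image) (auto intro: continuous_on_subset[OF assms])
  then obtain B where B: "\<And>y. y \<in> cball 0 \<bar>r\<bar> \<Longrightarrow> norm (f y) \<le> B"
    using compact_imp_bounded bounded_iff by (metis imageI)
  have "norm ((r / norm x) *\<^sub>R x) \<le> \<bar>r\<bar>" for x :: "real^'n"
    by (cases "x = 0") (auto simp: abs_div)
  with B have "\<And>x. x \<in> ball 0 1 \<Longrightarrow> norm (sphere_integrand r f x) \<le> B"
    by (simp add: sphere_integrand_def)
  moreover have "emeasure lborel (ball (0::real^'n) 1) < \<infinity>"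
    by (rule emeasure_bounded_finite[OF bounded_ball])
  ultimately show ?thesis
    using borel_measurable_sphere_integrand[OF assms]
    by (intro integrableI_bounded_set[where A = "ball 0 1" and B = B]) (auto simp: sphere_integrand_def)
qed

lemma sphere_avg_eq_lborel:
  fixes f :: "real^'n::finite \<Rightarrow> real"
  assumes "continuous_on UNIV f"
  shows "sphere_avg r f = integral\<^sup>L lborel (sphere_integrand r f) / measure lebesgue (ball (0::real^'n) 1)"
proof -
  have "integral (ball 0 1) (\<lambda>x. f ((r / norm x) *\<^sub>R x)) = integral UNIV (sphere_integrand r f)"
    unfolding sphere_integrand_def by (rule integral_restrict_UNIV[symmetric])
  also have "\<dots> = integral\<^sup>L lborel (sphere_integrand r f)"
    by (rule integral_unique[OF has_integral_integral_lborel[OF integrable_sphere_integrand[OF assms]]])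
  finally show ?thesis
    unfolding sphere_avg_def by simp
qed

lemma sphere_avg_add:
  fixes f g :: "real^'n::finite \<Rightarrow> real"
  assumes "continuous_on UNIV f" and "continuous_on UNIV g"
  shows "sphere_avg r (\<lambda>x. f x + g x) = sphere_avg r f + sphere_avg r g"
proof -
  have "sphere_integrand r (\<lambda>x. f x + g x) = (\<lambda>x. sphere_integrand r f x + sphere_integrand r g x)"
    by (auto simp: sphere_integrand_def)
  then show ?thesis
    using assms integrable_sphere_integrand[OF assms(1)] integrable_sphere_integrand[OF assms(2)]
    by (simp add: sphere_avg_eq_lborel continuous_on_add add_divide_distrib)
qed

lemma sphere_avg_sum:
  fixes f :: "'a \<Rightarrow> real^'n::finite \<Rightarrow> real"
  assumes "\<And>i. i \<in> I \<Longrightarrow> continuous_on UNIV (f i)"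
  shows "sphere_avg r (\<lambda>x. \<Sum>i\<in>I. f i x) = (\<Sum>i\<in>I. sphere_avg r (f i))"
proof -
  have "sphere_integrand r (\<lambda>x. \<Sum>i\<in>I. f i x) = (\<lambda>x. \<Sum>i\<in>I. sphere_integrand r (f i) x)"
    by (auto simp: sphere_integrand_def)
  moreover have "integral\<^sup>L lborel (\<lambda>x. \<Sum>i\<in>I. sphere_integrand r (f i) x) =
      (\<Sum>i\<in>I. integral\<^sup>L lborel (sphere_integrand r (f i)))"
    using assms integrable_sphere_integrand by (intro Bochner_Integration.integral_sum) auto
  ultimately show ?thesis
    using assms by (simp add: sphere_avg_eq_lborel continuous_on_sum sum_divide_distrib)
qed

lemma sphere_avg_cmult: "sphere_avg r (\<lambda>x. c * f x) = c * sphere_avg r f"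
  by (simp add: sphere_avg_def)

lemma sphere_avg_const: "sphere_avg r (\<lambda>x::real^'n::finite. c) = c"
proof -
  have "integral (ball 0 1) (\<lambda>x::real^'n. c) = c * integral (ball 0 1) (\<lambda>x::real^'n. 1)"
    using integral_mult_right[of "ball 0 1" c "\<lambda>x. 1"] by simp
  also have "\<dots> = c * measure lebesgue (ball (0::real^'n) 1)"
    by (simp only: lmeasure_integral[OF lmeasurable_ball])
  finally show ?thesis
    using content_ball_pos[of 1 "0::real^'n"] by (simp add: sphere_avg_def)
qed

lemma sphere_avg_cong:
  fixes f g :: "real^'n::finite \<Rightarrow> real"
  assumes "r > 0" and "\<And>y. norm y = r \<Longrightarrow> f y = g y"
  shows "sphere_avg r f = sphere_avg r g"
proof -
  have "integral (ball 0 1) (\<lambda>x. f ((r / norm x) *\<^sub>R x)) = integral (ball 0 1) (\<lambda>x. g ((r / norm x) *\<^sub>R x))"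
    by (rule integral_spike[of "{0}"]) (use assms in auto)
  then show ?thesis
    by (simp add: sphere_avg_def)
qed

lemma sphere_avg_compose_orthogonal:
  fixes f :: "real^'n::finite \<Rightarrow> real"
  assumes T: "orthogonal_transformation T" "lebesgue_scaling 1 T" and f: "continuous_on UNIV f"
  shows "sphere_avg r (\<lambda>x. f (T x)) = sphere_avg r f"
proof -
  have lin: "linear T"
    using T by (simp add: orthogonal_transformation_linear)
  then have "continuous_on UNIV T"
    by (simp add: linear_continuous_on linear_linear)
  then have cont: "continuous_on UNIV (\<lambda>x. f (T x))" and meas: "T \<in> measurable lborel borel"
    using continuous_on_compose[of UNIV T f] f borel_measurable_continuous_onI
    by (auto simp: o_def continuous_on_subset)
  have "sphere_integrand r (\<lambda>x. f (T x)) = (\<lambda>x. sphere_integrand r f (T x))"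
    by (auto simp: sphere_integrand_def orthogonal_transformation_norm[OF T(1)] linear_cmul[OF lin])
  then have "integral\<^sup>L lborel (sphere_integrand r (\<lambda>x. f (T x))) =
      integral\<^sup>L (distr lborel borel T) (sphere_integrand r f)"
    using integral_distr[OF meas borel_measurable_sphere_integrand[OF f]] by simp
  then show ?thesis
    using distr_lborel_orthogonal_transformation[OF T] by (simp add: sphere_avg_eq_lborel cont f)
qed

section \<open>Monomials and the design defect\<close>

definition monomial :: "('n::finite \<Rightarrow> nat) \<Rightarrow> real^'n \<Rightarrow> real" where
  "monomial \<alpha> x = (\<Prod>i\<in>UNIV. (x$i) ^ \<alpha> i)"

lemma continuous_on_monomial [continuous_intros]: "continuous_on S (monomial \<alpha>)"
  unfolding monomial_def by (intro continuous_intros)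

lemma monomial_add_2: "monomial (\<alpha>(i := \<alpha> i + 2)) x = (x$i)\<^sup>2 * monomial \<alpha> x"
proof -
  have "monomial (\<alpha>(i := \<alpha> i + 2)) x = (\<Prod>j\<in>UNIV. (if j = i then (x$j)\<^sup>2 else 1) * (x$j) ^ \<alpha> j)"
    unfolding monomial_def by (rule prod.cong) (simp_all add: power_add power2_eq_square mult.commute)
  then show ?thesis
    by (simp add: prod.distrib prod.delta monomial_def)
qed

text \<open>For s = 0 this is the difference of the two sides of the design equation for f; the factor
  norm x ^ (2 * s) accounts for multiplication of f by the radial polynomial |x|^(2s).\<close>

definition design_defect ::
    "(real^'n::finite) set \<Rightarrow> (real^'n \<Rightarrow> real) \<Rightarrow> nat \<Rightarrow> (real^'n \<Rightarrow> real) \<Rightarrow> real" where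
  "design_defect X w s f = (\<Sum>x\<in>X. w x * norm x ^ (2 * s) * (f x - sphere_avg (norm x) f))"

lemma design_defect_add:
  assumes "continuous_on UNIV f" and "continuous_on UNIV g"
  shows "design_defect X w s (\<lambda>x. f x + g x) = design_defect X w s f + design_defect X w s g"
  unfolding design_defect_def sphere_avg_add[OF assms] sum.distrib[symmetric]
  by (rule sum.cong) (simp_all add: algebra_simps)

lemma design_defect_cmult: "design_defect X w s (\<lambda>x. c * f x) = c * design_defect X w s f"
  unfolding design_defect_def sphere_avg_cmult by (simp add: algebra_simps sum_distrib_left)

lemma design_defect_const: "design_defect X w s (\<lambda>x. c) = 0"
  by (simp add: design_defect_def sphere_avg_const)

lemma design_defect_sum:
  fixes f :: "'a \<Rightarrow> real^'n::finite \<Rightarrow> real"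
  assumes "\<And>i. i \<in> I \<Longrightarrow> continuous_on UNIV (f i)"
  shows "design_defect X w s (\<lambda>x. \<Sum>i\<in>I. f i x) = (\<Sum>i\<in>I. design_defect X w s (f i))"
  unfolding design_defect_def
  by (simp add: assms sphere_avg_sum sum_distrib_left right_diff_distrib sum_subtractf sum.swap[of _ I X])

lemma design_defect_compose_hyperoct:
  fixes f :: "real^'n::finite \<Rightarrow> real"
  assumes g: "g \<in> hyperoct" and sym: "fully_symmetric X w" and f: "continuous_on UNIV f"
  shows "design_defect X w s (\<lambda>x. f (g x)) = design_defect X w s f"
proof -
  have orth: "orthogonal_transformation g"
    using orthogonal_transformation_hyperoct[OF g] .
  have gX: "g ` X = X" and wg: "\<And>x. x \<in> X \<Longrightarrow> w (g x) = w x"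
    using sym g unfolding fully_symmetric_def by (auto, metis image_eqI)
  have "design_defect X w s (\<lambda>x. f (g x)) =
      (\<Sum>x\<in>X. w (g x) * norm (g x) ^ (2 * s) * (f (g x) - sphere_avg (norm (g x)) f))"
    unfolding design_defect_def
    using sphere_avg_compose_orthogonal[OF orth lebesgue_scaling_hyperoct[OF g] f]
    by (simp add: wg orthogonal_transformation_norm[OF orth])
  also have "\<dots> = (\<Sum>y\<in>g ` X. w y * norm y ^ (2 * s) * (f y - sphere_avg (norm y) f))"
    using orthogonal_transformation_inj[OF orth]
    by (simp add: sum.reindex inj_on_subset[of g UNIV X])
  finally show ?thesis
    by (simp add: gX design_defect_def)
qed

lemma design_defect_mult_norm_sq:
  assumes "0 \<notin> X"
  shows "design_defect X w s (\<lambda>x. (norm x)\<^sup>2 * f x) = design_defect X w (Suc s) f"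
proof -
  have "sphere_avg (norm x) (\<lambda>y. (norm y)\<^sup>2 * f y) = (norm x)\<^sup>2 * sphere_avg (norm x) f" if "x \<in> X" for x
    using assms that sphere_avg_cong[of "norm x" "\<lambda>y. (norm y)\<^sup>2 * f y" "\<lambda>y. (norm x)\<^sup>2 * f y"]
    by (auto simp: sphere_avg_cmult)
  then show ?thesis
    unfolding design_defect_def by (intro sum.cong) (simp_all add: algebra_simps power_mult power2_eq_square)
qed

lemma design_defect_raise_exponent:
  fixes \<alpha> :: "'n::finite \<Rightarrow> nat"
  assumes "0 \<notin> X"
  shows "(\<Sum>i\<in>UNIV. design_defect X w s (monomial (\<alpha>(i := \<alpha> i + 2)))) = design_defect X w (Suc s) (monomial \<alpha>)"
proof -
  have "monomial (\<alpha>(i := \<alpha> i + 2)) = (\<lambda>x. (x$i)\<^sup>2 * monomial \<alpha> x)" for i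
    by (rule ext) (rule monomial_add_2)
  then have "(\<Sum>i\<in>UNIV. design_defect X w s (monomial (\<alpha>(i := \<alpha> i + 2)))) =
      design_defect X w s (\<lambda>x. \<Sum>i\<in>UNIV. (x$i)\<^sup>2 * monomial \<alpha> x)"
    by (simp only:) (rule design_defect_sum[symmetric], intro continuous_intros)
  also have "(\<lambda>x::real^'n. \<Sum>i\<in>UNIV. (x$i)\<^sup>2 * monomial \<alpha> x) = (\<lambda>x. (norm x)\<^sup>2 * monomial \<alpha> x)"
    by (simp add: norm_vec_def L2_set_def sum_nonneg sum_distrib_right)
  also have "design_defect X w s \<dots> = design_defect X w (Suc s) (monomial \<alpha>)"
    by (rule design_defect_mult_norm_sq[OF assms])
  finally show ?thesis .
qed

lemma sum_norm_spectrum_layer: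
  fixes h :: "real^'n::finite \<Rightarrow> real"
  assumes "finite X"
  shows "(\<Sum>r\<in>norm_spectrum X. \<Sum>x\<in>layer X r. h x) = (\<Sum>x\<in>X. h x)"
  unfolding norm_spectrum_def layer_def by (rule sum.group) (use assms in auto)

lemma euclidean_design_iff_design_defect:
  assumes "finite X"
  shows "euclidean_design X w t \<longleftrightarrow> (\<forall>f. poly_deg_le t f \<longrightarrow> design_defect X w 0 f = 0)"
proof -
  have "(\<Sum>r\<in>norm_spectrum X. layer_weight X w r * sphere_avg r f) = (\<Sum>x\<in>X. w x * sphere_avg (norm x) f)"
    for f :: "real^'a \<Rightarrow> real"
    unfolding layer_weight_def sum_distrib_right sum_norm_spectrum_layer[OF assms, symmetric]
    by (intro sum.cong) (auto simp: layer_def)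
  moreover have "design_defect X w 0 f = (\<Sum>x\<in>X. w x * f x) - (\<Sum>x\<in>X. w x * sphere_avg (norm x) f)"
    for f :: "real^'a \<Rightarrow> real"
    by (simp add: design_defect_def sum_subtractf right_diff_distrib)
  ultimately show ?thesis
    unfolding euclidean_design_def by auto
qed

lemma euclidean_design_iff_monomials:
  assumes "finite X"
  shows "euclidean_design X w t \<longleftrightarrow>
    (\<forall>\<alpha>. (\<Sum>i\<in>UNIV. \<alpha> i) \<le> t \<longrightarrow> design_defect X w 0 (monomial \<alpha>) = 0)"
  unfolding euclidean_design_iff_design_defect[OF assms]
proof (intro iffI allI impI)
  fix \<alpha> :: "'a \<Rightarrow> nat"
  assume "\<forall>f. poly_deg_le t f \<longrightarrow> design_defect X w 0 f = 0" and "(\<Sum>i\<in>UNIV. \<alpha> i) \<le> t"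
  moreover have "poly_deg_le t (monomial \<alpha>)" if "(\<Sum>i\<in>UNIV. \<alpha> i) \<le> t"
    unfolding poly_deg_le_def
    by (intro exI[of _ "{\<alpha>}"] exI[of _ "\<lambda>_. 1"]) (use that in \<open>auto simp: monomial_def fun_eq_iff\<close>)
  ultimately show "design_defect X w 0 (monomial \<alpha>) = 0"
    by blast
next
  fix f :: "real^'a \<Rightarrow> real"
  assume H: "\<forall>\<alpha>. (\<Sum>i\<in>UNIV. \<alpha> i) \<le> t \<longrightarrow> design_defect X w 0 (monomial \<alpha>) = 0"
    and "poly_deg_le t f"
  then obtain A c where A: "finite A" "\<forall>\<alpha>\<in>A. (\<Sum>i\<in>UNIV. \<alpha> i) \<le> t"
    and f: "f = (\<lambda>x. \<Sum>\<alpha>\<in>A. c \<alpha> * monomial \<alpha> x)"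
    unfolding poly_deg_le_def monomial_def by blast
  have "design_defect X w 0 f = (\<Sum>\<alpha>\<in>A. c \<alpha> * design_defect X w 0 (monomial \<alpha>))"
    unfolding f by (subst design_defect_sum) (auto intro: continuous_intros simp: design_defect_cmult)
  then show "design_defect X w 0 f = 0"
    using H A(2) by simp
qed

lemma design_defect_vanishes:
  assumes "finite X" and "0 \<notin> X" and "euclidean_design X w t"
  shows "(\<Sum>i\<in>UNIV. \<alpha> i) + 2 * s \<le> t \<Longrightarrow> design_defect X w s (monomial \<alpha>) = 0"
proof (induction s arbitrary: \<alpha>)
  case 0
  then show ?case
    using assms(3) euclidean_design_iff_monomials[OF assms(1)] by simp
next
  case (Suc s)
  have "(\<Sum>j\<in>UNIV. (\<alpha>(i := \<alpha> i + 2)) j) = (\<Sum>j\<in>UNIV. \<alpha> j + (if j = i then 2 else 0))" for i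
    by (rule sum.cong) auto
  then have "(\<Sum>j\<in>UNIV. (\<alpha>(i := \<alpha> i + 2)) j) = (\<Sum>j\<in>UNIV. \<alpha> j) + 2" for i
    by (simp add: sum.distrib)
  then show ?case
    using Suc by (simp flip: design_defect_raise_exponent[OF assms(2)])
qed

lemma moment_eq_design_defect:
  fixes f :: "real^'n::finite \<Rightarrow> real"
  assumes "finite X" and "0 \<notin> X" and "\<And>r. r > 0 \<Longrightarrow> sphere_avg r f = 0"
  shows "moment X w s f = design_defect X w s f"
proof -
  have avg: "sphere_avg (norm x) f = 0" if "x \<in> X" for x
    using assms(2,3) that by (metis zero_less_norm_iff)
  have "moment X w s f = (\<Sum>r\<in>norm_spectrum X. \<Sum>x\<in>layer X r. w x * norm x ^ (2 * s) * f x)"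
    unfolding moment_def by (intro sum.cong) (auto simp: layer_def)
  also have "\<dots> = design_defect X w s f"
    unfolding sum_norm_spectrum_layer[OF assms(1)] design_defect_def
    by (intro sum.cong) (simp_all add: avg)
  finally show ?thesis .
qed

section \<open>Exponent shapes and permutation invariance\<close>

definition coord_list :: "'n::{finite,linorder} list" where
  "coord_list = sorted_list_of_set UNIV"

lemma distinct_coord_list: "distinct (coord_list :: 'n::{finite,linorder} list)"
  and set_coord_list: "set (coord_list :: 'n::{finite,linorder} list) = UNIV"
  and length_coord_list: "length (coord_list :: 'n::{finite,linorder} list) = CARD('n)"
  by (simp_all add: coord_list_def)

lemma crd_eq_nth_coord_list: "crd k x = x $ (coord_list ! k)"
  by (simp add: crd_def coord_list_def)

lemma continuous_on_crd [continuous_intros]: "continuous_on S (crd k)"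
  unfolding crd_eq_nth_coord_list[abs_def] by (intro continuous_intros)

lemma bij_betw_nth_coord_list:
  "bij_betw ((!) (coord_list :: 'n::{finite,linorder} list)) {..<CARD('n)} UNIV"
  by (rule bij_betw_nth) (simp_all add: distinct_coord_list set_coord_list length_coord_list)

lemma nth_coord_list_eq_iff:
  "j < CARD('n) \<Longrightarrow> k < CARD('n) \<Longrightarrow> (coord_list ! j :: 'n::{finite,linorder}) = coord_list ! k \<longleftrightarrow> j = k"
  using nth_eq_iff_index_eq[OF distinct_coord_list] by (simp add: length_coord_list)

definition coord_index :: "'n::{finite,linorder} \<Rightarrow> nat" where
  "coord_index i = (THE k. k < CARD('n) \<and> coord_list ! k = i)"

lemma coord_index:
  "coord_index i < CARD('n)" "coord_list ! coord_index i = (i :: 'n::{finite,linorder})"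
proof -
  have "\<exists>!k. k < CARD('n) \<and> coord_list ! k = i"
    using distinct_Ex1[OF distinct_coord_list, of i] by (simp add: set_coord_list length_coord_list)
  then show "coord_index i < CARD('n)" "coord_list ! coord_index i = i"
    unfolding coord_index_def by (metis (mono_tags, lifting) theI')+
qed

lemma coord_index_nth: "k < CARD('n) \<Longrightarrow> coord_index (coord_list ! k :: 'n::{finite,linorder}) = k"
  using coord_index nth_coord_list_eq_iff by blast

text \<open>Exponent lists are read from the first coordinate on: padded_exponent [a_1, ..., a_k] is the
  exponent vector of x_1^a_1 ... x_k^a_k.\<close>

definition padded_exponent :: "nat list \<Rightarrow> 'n::{finite,linorder} \<Rightarrow> nat" where
  "padded_exponent xs i = (if coord_index i < length xs then xs ! coord_index i else 0)"

lemma padded_exponent_nth: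
  "k < CARD('n) \<Longrightarrow> padded_exponent xs (coord_list ! k :: 'n::{finite,linorder}) = (if k < length xs then xs ! k else 0)"
  by (simp add: padded_exponent_def coord_index_nth)

lemma map_padded_exponent:
  assumes "length xs \<le> CARD('n::{finite,linorder})"
  shows "map (padded_exponent xs) (coord_list :: 'n list) = xs @ replicate (CARD('n) - length xs) 0"
  using assms by (intro nth_equalityI) (auto simp: length_coord_list padded_exponent_nth nth_append)

lemma sum_padded_exponent:
  assumes "length xs \<le> CARD('n::{finite,linorder})"
  shows "(\<Sum>i\<in>UNIV. padded_exponent xs (i :: 'n)) = sum_list xs"
proof -
  have "(\<Sum>i\<in>UNIV. padded_exponent xs (i :: 'n)) = sum_list (map (padded_exponent xs) (coord_list :: 'n list))"
    by (simp add: sum_list_distinct_conv_sum_set[OF distinct_coord_list] set_coord_list)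
  then show ?thesis
    by (simp only: map_padded_exponent[OF assms] sum_list_append sum_list_replicate)
qed

fun coord_monomial :: "nat list \<Rightarrow> nat \<Rightarrow> real^'n::{finite,linorder} \<Rightarrow> real" where
  "coord_monomial [] k x = 1"
| "coord_monomial (a # xs) k x = crd k x ^ a * coord_monomial xs (Suc k) x"

lemma continuous_on_coord_monomial [continuous_intros]: "continuous_on S (coord_monomial zs j)"
  by (induction zs arbitrary: j) (auto intro!: continuous_intros)

lemma coord_monomial_eq_prod: "coord_monomial xs j x = (\<Prod>k<length xs. crd (j + k) x ^ (xs ! k))"
  by (induction xs arbitrary: j) (simp_all add: prod.lessThan_Suc_shift del: prod.lessThan_Suc)

lemma monomial_padded_exponent:
  assumes "length xs \<le> CARD('n)"
  shows "monomial (padded_exponent xs) (x :: real^'n::{finite,linorder}) = coord_monomial xs 0 x"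
proof -
  have "monomial (padded_exponent xs) x = (\<Prod>k<CARD('n). crd k x ^ padded_exponent xs (coord_list ! k :: 'n))"
    unfolding monomial_def crd_eq_nth_coord_list
    using prod.reindex_bij_betw[OF bij_betw_nth_coord_list, of "\<lambda>i. (x$i) ^ padded_exponent xs i"]
    by (rule sym)
  also have "\<dots> = (\<Prod>k<length xs. crd k x ^ (xs ! k))"
    using assms by (intro prod.mono_neutral_cong_right) (auto simp: padded_exponent_nth)
  finally show ?thesis
    by (simp add: coord_monomial_eq_prod)
qed

text \<open>By hyperoctahedral invariance the defect of a monomial depends only on its shape, the sorted
  list of its nonzero exponents.\<close>

definition shape :: "nat list \<Rightarrow> nat list" where
  "shape xs = sort (filter (\<lambda>v. v \<noteq> 0) xs)"

lemma mset_eq_shape_padded: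
  "mset zs = mset (shape zs @ replicate (length zs - length (shape zs)) 0)"
proof (induction zs)
  case (Cons a zs)
  have "length (filter (\<lambda>v. v \<noteq> 0) zs) \<le> length zs"
    by (rule length_filter_le)
  with Cons show ?case
    by (auto simp: shape_def Suc_diff_le)
qed (simp add: shape_def)

lemma shape_padded: "shape (xs @ replicate m 0) = shape xs"
  by (simp add: shape_def)

lemma sorted_shape: "sorted (shape xs)"
  and set_shape: "set (shape xs) = set xs - {0}"
  and length_shape_le: "length (shape xs) \<le> length xs"
  and sum_list_shape: "sum_list (shape xs) = sum_list xs"
proof -
  show "sorted (shape xs)" "set (shape xs) = set xs - {0}" "length (shape xs) \<le> length xs"
    by (auto simp: shape_def)
  have "sum_list (shape xs) = sum_list (filter (\<lambda>v. v \<noteq> 0) xs)"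
    unfolding shape_def by (metis mset_sort sum_mset_sum_list)
  also have "\<dots> = sum_list xs"
    by (induction xs) auto
  finally show "sum_list (shape xs) = sum_list xs" .
qed

definition perm_invariant :: "(('n::finite \<Rightarrow> nat) \<Rightarrow> real) \<Rightarrow> bool" where
  "perm_invariant \<Phi> \<longleftrightarrow> (\<forall>\<alpha> \<sigma>. \<sigma> permutes UNIV \<longrightarrow> \<Phi> (\<alpha> \<circ> \<sigma>) = \<Phi> \<alpha>)"

lemma perm_invariant_mset_eq:
  fixes \<alpha> \<beta> :: "'n::{finite,linorder} \<Rightarrow> nat"
  assumes "perm_invariant \<Phi>" and "mset (map \<alpha> coord_list) = mset (map \<beta> coord_list)"
  shows "\<Phi> \<alpha> = \<Phi> \<beta>"
proof -
  obtain p where "p permutes {..<length (map \<alpha> (coord_list :: 'n list))}"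
    and p_map: "permute_list p (map \<alpha> coord_list) = map \<beta> coord_list"
    using mset_eq_permutation[OF assms(2)[symmetric]] by metis
  then have p: "p permutes {..<CARD('n)}"
    by (simp add: length_coord_list)
  define \<sigma> :: "'n \<Rightarrow> 'n" where "\<sigma> i = coord_list ! p (coord_index i)" for i
  have p_less: "k < CARD('n) \<Longrightarrow> p k < CARD('n)" for k
    using permutes_in_image[OF p(1)] by simp
  have "\<beta> (coord_list ! k) = \<alpha> (coord_list ! p k)" if "k < CARD('n)" for k
    using arg_cong[OF p_map, of "\<lambda>xs. xs ! k"] that p_less[OF that] p
    by (simp add: permute_list_nth length_coord_list)
  then have "\<beta> = \<alpha> \<circ> \<sigma>"
    by (metis (no_types) \<sigma>_def coord_index comp_apply ext)
  moreover have "inj \<sigma>"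
    unfolding \<sigma>_def inj_def
    by (metis coord_index nth_coord_list_eq_iff p_less permutes_inj[OF p(1)] inj_def)
  then have "\<sigma> permutes UNIV"
    using finite_UNIV_inj_surj[of \<sigma>] by (intro bij_imp_permutes) (auto simp: bij_def)
  ultimately show ?thesis
    using assms(1) unfolding perm_invariant_def by simp
qed

lemma perm_invariant_shape:
  fixes \<alpha> :: "'n::{finite,linorder} \<Rightarrow> nat"
  assumes "perm_invariant \<Phi>"
  shows "\<Phi> \<alpha> = \<Phi> (padded_exponent (shape (map \<alpha> coord_list)))"
proof (rule perm_invariant_mset_eq[OF assms])
  let ?zs = "map \<alpha> (coord_list :: 'n list)"
  have "length (shape ?zs) \<le> CARD('n)"
    using mset_eq_shape_padded[of ?zs] size_mset by (metis length_append le_add1 length_coord_list length_map)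
  then have map_eq: "map (padded_exponent (shape ?zs)) (coord_list :: 'n list) =
      shape ?zs @ replicate (CARD('n) - length (shape ?zs)) 0"
    by (rule map_padded_exponent)
  show "mset ?zs = mset (map (padded_exponent (shape ?zs)) (coord_list :: 'n list))"
    unfolding map_eq using mset_eq_shape_padded[of ?zs] by (simp add: length_coord_list)
qed

lemma perm_invariant_padded_shape:
  assumes "perm_invariant \<Phi>" and "length xs \<le> CARD('n::{finite,linorder})"
  shows "\<Phi> (padded_exponent xs :: 'n \<Rightarrow> nat) = \<Phi> (padded_exponent (shape xs))"
  using perm_invariant_shape[OF assms(1), of "padded_exponent xs"]
  by (simp add: map_padded_exponent[OF assms(2)] shape_padded)

definition hyperoct_invariant :: "((real^'n::finite \<Rightarrow> real) \<Rightarrow> real) \<Rightarrow> bool" where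
  "hyperoct_invariant L \<longleftrightarrow> (\<forall>f g. g \<in> hyperoct \<longrightarrow> continuous_on UNIV f \<longrightarrow> L (\<lambda>x. f (g x)) = L f)"

lemma hyperoct_invariant_sphere_avg: "hyperoct_invariant (sphere_avg r)"
  unfolding hyperoct_invariant_def
  using sphere_avg_compose_orthogonal orthogonal_transformation_hyperoct lebesgue_scaling_hyperoct
  by blast

lemma hyperoct_invariant_design_defect:
  "fully_symmetric X w \<Longrightarrow> hyperoct_invariant (design_defect X w s)"
  unfolding hyperoct_invariant_def using design_defect_compose_hyperoct by blast

lemma monomial_coord_refl_odd:
  assumes "odd (\<alpha> i)"
  shows "monomial \<alpha> (coord_refl i x) = - monomial \<alpha> x"
proof -
  have "monomial \<alpha> (coord_refl i x) = (\<Prod>j\<in>UNIV. (if j = i then -1 else 1) * (x$j) ^ \<alpha> j)"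
    unfolding monomial_def coord_refl_def by (rule prod.cong) (auto simp: assms power_minus_odd)
  then show ?thesis
    by (simp add: prod.distrib prod.delta monomial_def)
qed

lemma hyperoct_invariant_odd_monomial:
  assumes L: "hyperoct_invariant L" and neg: "L (\<lambda>x. - monomial \<alpha> x) = - L (monomial \<alpha>)"
    and "odd (\<alpha> i)"
  shows "L (monomial \<alpha>) = 0"
proof -
  have "L (monomial \<alpha>) = L (\<lambda>x. monomial \<alpha> (coord_refl i x))"
    using L coord_refl_hyperoct[of i]
    unfolding hyperoct_invariant_def by (simp add: continuous_on_monomial)
  also have "\<dots> = - L (monomial \<alpha>)"
    using neg monomial_coord_refl_odd[of \<alpha> i] \<open>odd (\<alpha> i)\<close> by simp
  finally show ?thesis
    by simp
qed

definition permute_coords :: "('n::finite \<Rightarrow> 'n) \<Rightarrow> real^'n \<Rightarrow> real^'n" where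
  "permute_coords \<sigma> x = (\<chi> j. x $ \<sigma> j)"

lemma permute_coords_hyperoct:
  assumes "\<sigma> permutes (UNIV :: 'n::finite set)"
  shows "permute_coords \<sigma> \<in> hyperoct"
  using assms finite_class.finite_UNIV
proof (induction rule: permutes_induct)
  case id
  then show ?case
    using hyperoct.hyp_id by (simp add: permute_coords_def id_def)
next
  case (swap a b p)
  have "permute_coords (Transposition.transpose a b \<circ> p) = permute_coords p \<circ> coord_transp a b"
    by (simp add: permute_coords_def coord_transp_def fun_eq_iff Transposition.transpose_def)
  then show ?case
    using hyperoct_compose[OF \<open>permute_coords p \<in> hyperoct\<close> coord_transp_hyperoct] by (simp only:)
qed

lemma monomial_comp_permutes:
  assumes "\<sigma> permutes UNIV"
  shows "monomial (\<alpha> \<circ> \<sigma>) x = monomial \<alpha> (permute_coords (inv \<sigma>) x)"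
  using prod.permute[OF assms, of "\<lambda>j. (x $ inv \<sigma> j) ^ \<alpha> j"]
  by (simp add: monomial_def permute_coords_def permutes_inverses(2)[OF assms])

lemma perm_invariant_monomial:
  assumes "hyperoct_invariant L"
  shows "perm_invariant (\<lambda>\<alpha>. L (monomial \<alpha>))"
  unfolding perm_invariant_def
proof (intro allI impI)
  fix \<alpha> :: "'a \<Rightarrow> nat" and \<sigma> :: "'a \<Rightarrow> 'a"
  assume \<sigma>: "\<sigma> permutes UNIV"
  then have "monomial (\<alpha> \<circ> \<sigma>) = (\<lambda>x. monomial \<alpha> (permute_coords (inv \<sigma>) x))"
    by (simp add: fun_eq_iff monomial_comp_permutes)
  then show "L (monomial (\<alpha> \<circ> \<sigma>)) = L (monomial \<alpha>)"
    using assms permute_coords_hyperoct[OF permutes_inv[OF \<sigma>]]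
    unfolding hyperoct_invariant_def by (simp add: continuous_on_monomial)
qed

definition monomial_defect ::
    "(real^'n::{finite,linorder}) set \<Rightarrow> (real^'n::{finite,linorder} \<Rightarrow> real) \<Rightarrow> nat \<Rightarrow> nat list \<Rightarrow> real" where
  "monomial_defect X w s xs = design_defect X w s (monomial (padded_exponent xs))"

lemma design_defect_eq_monomial_defect_shape:
  fixes X :: "(real^'n::{finite,linorder}) set"
  assumes "fully_symmetric X w" and "length xs \<le> CARD('n)"
  shows "design_defect X w s (monomial (padded_exponent xs :: 'n \<Rightarrow> nat)) = monomial_defect X w s (shape xs)"
  using perm_invariant_padded_shape[OF perm_invariant_monomial[OF hyperoct_invariant_design_defect] assms(2)]
    assms(1)
  unfolding monomial_defect_def by blast

lemma exponent_eqI: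
  fixes \<alpha> \<beta> :: "'n::{finite,linorder} \<Rightarrow> nat"
  assumes "\<And>j. j < CARD('n) \<Longrightarrow> \<alpha> (coord_list ! j) = \<beta> (coord_list ! j)"
  shows "\<alpha> = \<beta>"
  using assms coord_index by (metis ext)

lemma padded_exponent_add_2:
  assumes "k < CARD('n::{finite,linorder})" and "length xs \<le> CARD('n)"
  shows "(padded_exponent xs :: 'n \<Rightarrow> nat)(coord_list ! k := padded_exponent xs (coord_list ! k :: 'n) + 2) =
    padded_exponent (if k < length xs then xs[k := xs ! k + 2] else xs @ replicate (k - length xs) 0 @ [2])"
proof (rule exponent_eqI)
  fix j
  assume j: "j < CARD('n)"
  have "padded_exponent ys (coord_list ! j :: 'n) = (if j < length ys then ys ! j else 0)"
    and "padded_exponent ys (coord_list ! k :: 'n) = (if k < length ys then ys ! k else 0)" for ys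
    using j assms(1) by (simp_all add: padded_exponent_nth)
  moreover have "(coord_list ! j :: 'n) = coord_list ! k \<longleftrightarrow> j = k"
    by (rule nth_coord_list_eq_iff[OF j assms(1)])
  ultimately show "((padded_exponent xs :: 'n \<Rightarrow> nat)(coord_list ! k := padded_exponent xs (coord_list ! k :: 'n) + 2))
        (coord_list ! j) =
      padded_exponent (if k < length xs then xs[k := xs ! k + 2] else xs @ replicate (k - length xs) 0 @ [2])
        (coord_list ! j :: 'n)"
    using assms(2) by (auto simp: nth_list_update nth_append)
qed

lemma monomial_defect_raise_exponent:
  fixes X :: "(real^'n::{finite,linorder}) set"
  assumes sym: "fully_symmetric X w" and "0 \<notin> X" and len: "length xs \<le> CARD('n)"
  shows "monomial_defect X w (Suc s) xs =
     (\<Sum>j<length xs. monomial_defect X w s (shape (xs[j := xs ! j + 2]))) +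
     real (CARD('n) - length xs) * monomial_defect X w s (shape (xs @ [2]))"
proof -
  let ?g = "\<lambda>i::'n. design_defect X w s (monomial ((padded_exponent xs)(i := padded_exponent xs i + 2)))"
  have "monomial_defect X w (Suc s) xs = (\<Sum>k<CARD('n). ?g (coord_list ! k))"
    unfolding monomial_defect_def design_defect_raise_exponent[OF assms(2), symmetric]
    using sum.reindex_bij_betw[OF bij_betw_nth_coord_list, of ?g] by simp
  also have "\<dots> = (\<Sum>k<length xs. ?g (coord_list ! k)) + (\<Sum>k\<in>{length xs..<CARD('n)}. ?g (coord_list ! k))"
    using len by (simp add: lessThan_atLeast0 sum.atLeastLessThan_concat)
  also have "(\<Sum>k<length xs. ?g (coord_list ! k)) = (\<Sum>k<length xs. monomial_defect X w s (shape (xs[k := xs ! k + 2])))"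
  proof (rule sum.cong)
    fix k
    assume "k \<in> {..<length xs}"
    with len have "k < length xs" "k < CARD('n)" "length (xs[k := xs ! k + 2]) \<le> CARD('n)"
      by auto
    with len show "?g (coord_list ! k) = monomial_defect X w s (shape (xs[k := xs ! k + 2]))"
      by (simp only: padded_exponent_add_2 if_True design_defect_eq_monomial_defect_shape[OF sym])
  qed rule
  also have "(\<Sum>k\<in>{length xs..<CARD('n)}. ?g (coord_list ! k)) =
      (\<Sum>k\<in>{length xs..<CARD('n)}. monomial_defect X w s (shape (xs @ [2])))"
  proof (rule sum.cong)
    fix k
    assume "k \<in> {length xs..<CARD('n)}"
    with len have "\<not> k < length xs" "k < CARD('n)" "length (xs @ replicate (k - length xs) 0 @ [2]) \<le> CARD('n)"
      by auto
    with len have "?g (coord_list ! k) = monomial_defect X w s (shape (xs @ replicate (k - length xs) 0 @ [2]))"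
      by (simp only: padded_exponent_add_2 if_False design_defect_eq_monomial_defect_shape[OF sym])
    then show "?g (coord_list ! k) = monomial_defect X w s (shape (xs @ [2]))"
      by (simp add: shape_def)
  qed rule
  finally show ?thesis
    by simp
qed

lemma monomial_defect_vanishes:
  fixes X :: "(real^'n::{finite,linorder}) set"
  assumes "finite X" and "0 \<notin> X" and "euclidean_design X w t"
    and "length xs \<le> CARD('n)" and "sum_list xs + 2 * s \<le> t"
  shows "monomial_defect X w s xs = 0"
  using design_defect_vanishes[OF assms(1-3), of "padded_exponent xs :: 'n \<Rightarrow> nat" s] assms(4,5)
  by (simp add: monomial_defect_def sum_padded_exponent)

definition even_shapes_le_8 :: "nat list set" where
  "even_shapes_le_8 = {[], [2], [4], [2,2], [6], [2,4], [2,2,2], [8], [2,6], [4,4], [2,2,4], [2,2,2,2]}"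

lemma even_list_bounds:
  assumes ev: "\<forall>v\<in>set ys. even v \<and> v \<noteq> (0::nat)" and sum: "sum_list ys \<le> 8"
  shows "set ys \<subseteq> {2, 4, 6, 8}" and "length ys \<le> 4"
proof -
  have "v = 2 \<or> v = 4 \<or> v = 6 \<or> v = 8" if "v \<in> set ys" for v
  proof -
    have "v \<le> 8" "even v" "v \<noteq> 0"
      using ev sum that member_le_sum_list[OF that] by auto
    then show ?thesis
      by presburger
  qed
  then show vals: "set ys \<subseteq> {2, 4, 6, 8}"
    by blast
  have "2 * length ys \<le> sum_list ys"
    using vals by (induction ys) auto
  with sum show "length ys \<le> 4"
    by simp
qed

lemma sorted_even_list_in_even_shapes_le_8:
  assumes sorted: "sorted ys" and "\<forall>v\<in>set ys. even v \<and> v \<noteq> 0" and sum: "sum_list ys \<le> 8"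
  shows "ys \<in> even_shapes_le_8"
proof -
  note bounds = even_list_bounds[OF assms(2,3)]
  then have ge2: "2 \<le> v" if "v \<in> set ys" for v
    using that by fastforce
  from bounds(2) consider "ys = []" | a where "ys = [a]" | a b where "ys = [a, b]"
    | a b c where "ys = [a, b, c]" | a b c d where "ys = [a, b, c, d]"
    by (auto simp: le_Suc_eq numeral_eq_Suc length_Suc_conv)
  then show ?thesis
  proof cases
    case (4 a b c)
    from 4 ge2 have "2 \<le> a" "2 \<le> b" "2 \<le> c"
      by simp_all
    moreover from 4 sorted sum have "a \<le> b" "b \<le> c" "a + b + c \<le> 8"
      by simp_all
    ultimately have "a = 2" "b \<le> 3" "c \<le> 4"
      by linarith+
    moreover from 4 bounds(1) have "b \<in> {2, 4, 6, 8}" "c \<in> {2, 4, 6, 8}"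
      by simp_all
    ultimately show ?thesis
      using 4 by (auto simp: even_shapes_le_8_def)
  next
    case (5 a b c d)
    from 5 ge2 have "2 \<le> a" "2 \<le> b" "2 \<le> c" "2 \<le> d"
      by simp_all
    moreover from 5 sum have "a + b + c + d \<le> 8"
      by simp
    ultimately show ?thesis
      using 5 by (simp add: even_shapes_le_8_def)
  qed (use bounds(1) sorted sum in \<open>auto simp: even_shapes_le_8_def\<close>)
qed

lemma euclidean_design_if_even_shapes:
  fixes X :: "(real^'n::{finite,linorder}) set"
  assumes fin: "finite X" and sym: "fully_symmetric X w" and "t \<le> 9"
    and H: "\<And>ys. ys \<in> even_shapes_le_8 \<Longrightarrow> sum_list ys \<le> t \<Longrightarrow> length ys \<le> CARD('n) \<Longrightarrow>
      monomial_defect X w 0 ys = 0"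
  shows "euclidean_design X w t"
  unfolding euclidean_design_iff_monomials[OF fin]
proof (intro allI impI)
  fix \<alpha> :: "'n \<Rightarrow> nat"
  assume deg: "(\<Sum>i\<in>UNIV. \<alpha> i) \<le> t"
  have L: "hyperoct_invariant (design_defect X w 0)"
    by (rule hyperoct_invariant_design_defect[OF sym])
  show "design_defect X w 0 (monomial \<alpha>) = 0"
  proof (cases "\<exists>i. odd (\<alpha> i)")
    case True
    then show ?thesis
      using hyperoct_invariant_odd_monomial[OF L] design_defect_cmult[of X w 0 "-1"] by auto
  next
    case False
    define ys where "ys = shape (map \<alpha> (coord_list :: 'n list))"
    have "design_defect X w 0 (monomial \<alpha>) = monomial_defect X w 0 ys"
      using perm_invariant_shape[OF perm_invariant_monomial[OF L]] unfolding ys_def monomial_defect_def .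
    moreover have "sum_list ys = (\<Sum>i\<in>UNIV. \<alpha> i)"
      unfolding ys_def sum_list_shape
      by (simp add: sum_list_distinct_conv_sum_set[OF distinct_coord_list] set_coord_list)
    moreover have "length ys \<le> CARD('n)"
      using length_shape_le[of "map \<alpha> coord_list"] by (simp add: ys_def length_coord_list)
    moreover have "\<forall>v\<in>set ys. even v \<and> v \<noteq> 0"
      using False by (auto simp: ys_def set_shape)
    moreover from this have "even (sum_list ys)"
      by (induction ys) auto
    ultimately show ?thesis
      using H sorted_even_list_in_even_shapes_le_8[of ys] sorted_shape deg \<open>t \<le> 9\<close>
      by (auto simp: ys_def elim!: evenE)
  qed
qed

section \<open>The test polynomials\<close>

definition poly_fun :: "(real \<times> nat list) list \<Rightarrow> real^'n::{finite,linorder} \<Rightarrow> real" where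
  "poly_fun ps x = (\<Sum>(c, xs)\<leftarrow>ps. c * monomial (padded_exponent xs) x)"

lemma poly_fun_Cons:
  "poly_fun ((c, xs) # ps) = (\<lambda>x. c * monomial (padded_exponent xs) x + poly_fun ps x)"
  by (simp add: poly_fun_def fun_eq_iff)

lemma continuous_on_poly_fun: "continuous_on S (poly_fun ps)"
  unfolding poly_fun_def by (induction ps) (auto intro!: continuous_intros)

lemma sphere_avg_poly_fun:
  "sphere_avg r (poly_fun ps :: real^'n::{finite,linorder} \<Rightarrow> real) =
    (\<Sum>(c, xs)\<leftarrow>ps. c * sphere_avg r (monomial (padded_exponent xs) :: real^'n::{finite,linorder} \<Rightarrow> real))"
proof (induction ps)
  case Nil
  then show ?case
    by (simp add: poly_fun_def sphere_avg_const)
next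
  case (Cons p ps)
  then show ?case
    by (cases p) (simp add: poly_fun_Cons sphere_avg_add sphere_avg_cmult continuous_intros continuous_on_poly_fun)
qed

lemma design_defect_poly_fun:
  "design_defect X w s (poly_fun ps) = (\<Sum>(c, xs)\<leftarrow>ps. c * monomial_defect X w s xs)"
proof (induction ps)
  case Nil
  then show ?case
    by (simp add: poly_fun_def design_defect_const)
next
  case (Cons p ps)
  then show ?case
    by (cases p) (simp add: poly_fun_Cons design_defect_add design_defect_cmult monomial_defect_def
        continuous_intros continuous_on_poly_fun)
qed

lemma nth_coord_list_0_neq_1:
  "2 \<le> CARD('n::{finite,linorder}) \<Longrightarrow> (coord_list ! 0 :: 'n) \<noteq> coord_list ! 1"
  by (simp add: nth_coord_list_eq_iff)

text \<open>The rotation by \<theta> with cos \<theta> = 3/5; as cos 4\<theta> = -527/625 \<noteq> 1, it does not fix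
  f42 = Re (x_1 + i x_2)^4.\<close>

definition rotation_3_4 :: "real^'n::{finite,linorder} \<Rightarrow> real^'n::{finite,linorder}" where
  "rotation_3_4 = plane_rotation (coord_list ! 0) (coord_list ! 1) (3/5) (4/5)"

lemma
  assumes "2 \<le> CARD('n)"
  shows orthogonal_transformation_rotation_3_4:
      "orthogonal_transformation (rotation_3_4 :: real^'n::{finite,linorder} \<Rightarrow> real^'n::{finite,linorder})"
    and lebesgue_scaling_rotation_3_4:
      "lebesgue_scaling 1 (rotation_3_4 :: real^'n::{finite,linorder} \<Rightarrow> real^'n::{finite,linorder})"
  using orthogonal_transformation_plane_rotation[OF nth_coord_list_0_neq_1[OF assms], of "3/5" "4/5"]
    lebesgue_scaling_plane_rotation[OF nth_coord_list_0_neq_1[OF assms], of "3/5" "4/5"]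
  by (simp_all add: rotation_3_4_def power2_eq_square)

lemma crd_rotation_3_4:
  fixes x :: "real^'n::{finite,linorder}"
  assumes n: "2 \<le> CARD('n)"
  shows "crd 0 (rotation_3_4 x) = 3/5 * crd 0 x - 4/5 * crd 1 x"
    and "crd (Suc 0) (rotation_3_4 x) = 4/5 * crd 0 x + 3/5 * crd (Suc 0) x"
    and "2 \<le> k \<Longrightarrow> k < CARD('n) \<Longrightarrow> crd k (rotation_3_4 x) = crd k x"
proof -
  have "(coord_list ! 0 :: 'n) \<noteq> coord_list ! 1"
    by (rule nth_coord_list_0_neq_1[OF n])
  then show "crd 0 (rotation_3_4 x) = 3/5 * crd 0 x - 4/5 * crd 1 x"
    and "crd (Suc 0) (rotation_3_4 x) = 4/5 * crd 0 x + 3/5 * crd (Suc 0) x"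
    by (simp_all add: crd_eq_nth_coord_list rotation_3_4_def plane_rotation_def)
  assume "2 \<le> k" "k < CARD('n)"
  with n have "(coord_list ! k :: 'n) \<noteq> coord_list ! 0" "(coord_list ! k :: 'n) \<noteq> coord_list ! 1"
    by (simp_all add: nth_coord_list_eq_iff)
  then show "crd k (rotation_3_4 x) = crd k x"
    by (simp add: crd_eq_nth_coord_list rotation_3_4_def plane_rotation_def)
qed

lemma crd_coord_refl_0:
  fixes x :: "real^'n::{finite,linorder}"
  shows "crd 0 (coord_refl (coord_list ! 0) x) = - crd 0 x"
    and "0 < k \<Longrightarrow> k < CARD('n) \<Longrightarrow> crd k (coord_refl (coord_list ! 0) x) = crd k x"
proof -
  show "crd 0 (coord_refl (coord_list ! 0) x) = - crd 0 x"
    by (simp add: crd_eq_nth_coord_list coord_refl_def)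
  assume "0 < k" "k < CARD('n)"
  then have "(coord_list ! k :: 'n) \<noteq> coord_list ! 0"
    by (simp add: nth_coord_list_eq_iff)
  then show "crd k (coord_refl (coord_list ! 0) x) = crd k x"
    by (simp add: crd_eq_nth_coord_list coord_refl_def)
qed

text \<open>With g = Im (x_1 + i x_2)^4 the rotation maps f42 to cos 4\<theta> f42 + sin 4\<theta> g, and g is
  odd in x_1; invariance of the average under both maps forces the average of f42 h to vanish.\<close>

lemma sphere_avg_f42_mult_eq_0:
  fixes h :: "real^'n::{finite,linorder} \<Rightarrow> real"
  assumes n: "2 \<le> CARD('n)" and h: "continuous_on UNIV h"
    and h_rot: "\<And>x. h (rotation_3_4 x) = h x" and h_refl: "\<And>x. h (coord_refl (coord_list ! 0) x) = h x"
  shows "sphere_avg r (\<lambda>x. f42 x * h x) = 0"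
proof -
  define g :: "real^'n::{finite,linorder} \<Rightarrow> real"
    where "g x = 4 * crd 0 x ^ 3 * crd 1 x - 4 * crd 0 x * crd 1 x ^ 3" for x
  have f_rot: "f42 (rotation_3_4 x) = (-527/625) * f42 x + (336/625) * g x" for x
    using n by (simp add: f42_def g_def Let_def crd_rotation_3_4) algebra
  have g_refl: "g (coord_refl (coord_list ! 0) x) = - g x" for x
    using n by (simp add: g_def crd_coord_refl_0)
  have cont: "continuous_on UNIV (\<lambda>x. f42 x * h x)" "continuous_on UNIV (\<lambda>x. g x * h x)"
    unfolding f42_def g_def Let_def by (auto intro!: continuous_intros h)
  have "sphere_avg r (\<lambda>x. g x * h x) = sphere_avg r (\<lambda>x. - (g x * h x))"
    using hyperoct_invariant_sphere_avg[unfolded hyperoct_invariant_def, rule_format,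
        OF coord_refl_hyperoct[of "coord_list ! 0"] cont(2)]
    by (simp add: g_refl h_refl)
  then have g0: "sphere_avg r (\<lambda>x. g x * h x) = 0"
    using sphere_avg_cmult[of r "-1" "\<lambda>x. g x * h x"] by simp
  have "sphere_avg r (\<lambda>x. f42 x * h x) = sphere_avg r (\<lambda>x. (-527/625) * (f42 x * h x) + (336/625) * (g x * h x))"
    using sphere_avg_compose_orthogonal[OF orthogonal_transformation_rotation_3_4[OF n]
        lebesgue_scaling_rotation_3_4[OF n] cont(1)]
    by (simp add: f_rot h_rot algebra_simps)
  also have "\<dots> = (-527/625) * sphere_avg r (\<lambda>x. f42 x * h x) + (336/625) * sphere_avg r (\<lambda>x. g x * h x)"
    by (simp only: sphere_avg_add[OF continuous_on_mult_left[OF cont(1)] continuous_on_mult_left[OF cont(2)]]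
        sphere_avg_cmult)
  finally show ?thesis
    using g0 by simp
qed

lemma poly_fun_f42:
  "2 \<le> CARD('n) \<Longrightarrow>
    (f42 :: real^'n::{finite,linorder} \<Rightarrow> real) = poly_fun [(1, [4]), (-6, [2, 2]), (1, [0, 4])]"
  by (simp add: fun_eq_iff poly_fun_def monomial_padded_exponent f42_def Let_def)

lemma poly_fun_f63:
  "3 \<le> CARD('n) \<Longrightarrow> (f63 :: real^'n::{finite,linorder} \<Rightarrow> real) =
    poly_fun [(2, [6]), (2, [0, 6]), (2, [0, 0, 6]), (-15, [4, 2]), (-15, [2, 4]), (-15, [4, 0, 2]),
      (-15, [2, 0, 4]), (-15, [0, 4, 2]), (-15, [0, 2, 4]), (180, [2, 2, 2])]"
  by (simp add: fun_eq_iff poly_fun_def monomial_padded_exponent f63_def Let_def numeral_2_eq_2)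

lemma poly_fun_f82:
  "2 \<le> CARD('n) \<Longrightarrow> (f82 :: real^'n::{finite,linorder} \<Rightarrow> real) =
    poly_fun [(1, [8]), (-28, [6, 2]), (70, [4, 4]), (-28, [2, 6]), (1, [0, 8])]"
  by (simp add: fun_eq_iff poly_fun_def monomial_padded_exponent f82_def Let_def)

lemma poly_fun_f84:
  "4 \<le> CARD('n) \<Longrightarrow> (f84 :: real^'n::{finite,linorder} \<Rightarrow> real) =
    poly_fun [(3, [8]), (3, [0, 8]), (3, [0, 0, 8]), (3, [0, 0, 0, 8]),
      (-28, [6, 2]), (-28, [6, 0, 2]), (-28, [6, 0, 0, 2]), (-28, [2, 6]), (-28, [0, 6, 2]),
      (-28, [0, 6, 0, 2]), (-28, [2, 0, 6]), (-28, [0, 2, 6]), (-28, [0, 0, 6, 2]),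
      (-28, [2, 0, 0, 6]), (-28, [0, 2, 0, 6]), (-28, [0, 0, 2, 6]),
      (210, [4, 2, 2]), (210, [4, 2, 0, 2]), (210, [4, 0, 2, 2]), (210, [2, 4, 2]), (210, [2, 4, 0, 2]),
      (210, [0, 4, 2, 2]), (210, [2, 2, 4]), (210, [2, 0, 4, 2]), (210, [0, 2, 4, 2]),
      (210, [2, 2, 0, 4]), (210, [2, 0, 2, 4]), (210, [0, 2, 2, 4]), (-3780, [2, 2, 2, 2])]"
  by (simp add: fun_eq_iff poly_fun_def monomial_padded_exponent f84_def numeral_2_eq_2 numeral_3_eq_3
      eval_nat_numeral)

lemma sphere_avg_eq_shape:
  "length xs \<le> CARD('n) \<Longrightarrow> sphere_avg r (monomial (padded_exponent xs) :: real^'n::{finite,linorder} \<Rightarrow> real) =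
    sphere_avg r (monomial (padded_exponent (shape xs)) :: real^'n::{finite,linorder} \<Rightarrow> real)"
  by (rule perm_invariant_padded_shape[OF perm_invariant_monomial[OF hyperoct_invariant_sphere_avg]])

lemma coord_monomial_cong:
  assumes "\<And>k. j \<le> k \<Longrightarrow> k < j + length zs \<Longrightarrow> crd k y = crd k x"
  shows "coord_monomial zs j y = coord_monomial zs j x"
  using assms by (induction zs arbitrary: j) force+

lemma sphere_avg_f42_mult_monomial_eq_0:
  fixes zs :: "nat list"
  assumes n: "2 + length zs \<le> CARD('n)"
  shows "sphere_avg r (\<lambda>x::real^'n::{finite,linorder}.
    f42 x * ((crd 0 x)\<^sup>2 + (crd 1 x)\<^sup>2) ^ a * coord_monomial zs 2 x) = 0"
proof -
  have rot: "(crd 0 (rotation_3_4 x))\<^sup>2 + (crd 1 (rotation_3_4 x))\<^sup>2 = (crd 0 x)\<^sup>2 + (crd 1 x)\<^sup>2"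
    and refl: "(crd 0 (coord_refl (coord_list ! 0) x))\<^sup>2 + (crd 1 (coord_refl (coord_list ! 0) x))\<^sup>2 =
      (crd 0 x)\<^sup>2 + (crd 1 x)\<^sup>2"
    for x :: "real^'n::{finite,linorder}"
    using n by (simp_all add: crd_rotation_3_4 crd_coord_refl_0, algebra)
  have "coord_monomial zs 2 (rotation_3_4 x) = coord_monomial zs 2 x"
    and "coord_monomial zs 2 (coord_refl (coord_list ! 0) x) = coord_monomial zs 2 x"
    for x :: "real^'n::{finite,linorder}"
    using n by (auto intro!: coord_monomial_cong simp: crd_rotation_3_4 crd_coord_refl_0)
  with rot refl have "sphere_avg r (\<lambda>x::real^'n::{finite,linorder}.
      f42 x * (((crd 0 x)\<^sup>2 + (crd 1 x)\<^sup>2) ^ a * coord_monomial zs 2 x)) = 0"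
    using n by (intro sphere_avg_f42_mult_eq_0) (auto intro!: continuous_intros)
  then show ?thesis
    by (simp add: mult.assoc)
qed

lemma sphere_avg_poly_fun_eq_0:
  assumes "2 + length zs \<le> CARD('n)"
    and "poly_fun ps = (\<lambda>x::real^'n::{finite,linorder}.
      f42 x * ((crd 0 x)\<^sup>2 + (crd 1 x)\<^sup>2) ^ a * coord_monomial zs 2 x)"
  shows "(\<Sum>(c, xs)\<leftarrow>ps. c * sphere_avg r (monomial (padded_exponent xs) :: real^'n::{finite,linorder} \<Rightarrow> real)) = 0"
proof -
  have "(\<Sum>(c, xs)\<leftarrow>ps. c * sphere_avg r (monomial (padded_exponent xs) :: real^'n::{finite,linorder} \<Rightarrow> real)) =
      sphere_avg r (poly_fun ps :: real^'n::{finite,linorder} \<Rightarrow> real)"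
    by (rule sphere_avg_poly_fun[symmetric])
  also have "\<dots> = 0"
    unfolding assms(2) by (rule sphere_avg_f42_mult_monomial_eq_0[OF assms(1)])
  finally show ?thesis .
qed

text \<open>Each of the following relations is the vanishing average of f42 times a factor
  (x_1^2 + x_2^2)^a x_3^b x_4^c.\<close>

lemma sphere_avg_monomial_relations_6:
  fixes r :: real
  assumes n: "3 \<le> CARD('n)"
  defines "A ys \<equiv> sphere_avg r (monomial (padded_exponent ys) :: real^'n::{finite,linorder} \<Rightarrow> real)"
  shows "A [6] = 5 * A [2, 4]" and "A [2, 4] = 3 * A [2, 2, 2]"
proof -
  have shape: "A xs = A (shape xs)" if "length xs \<le> CARD('n)" for xs
    unfolding A_def by (rule sphere_avg_eq_shape[OF that])
  have "(\<Sum>(c, xs)\<leftarrow>[(1, [6]), (-5, [4, 2]), (-5, [2, 4]), (1, [0, 6])]. c * A xs) = 0"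
    unfolding A_def using n
    by (intro sphere_avg_poly_fun_eq_0[of "[]" _ 1])
      (simp_all add: fun_eq_iff poly_fun_def monomial_padded_exponent f42_def Let_def, algebra)
  then show "A [6] = 5 * A [2, 4]"
    using n shape[of "[0, 6]"] shape[of "[4, 2]"] by (simp add: shape_def)
  have "(\<Sum>(c, xs)\<leftarrow>[(1, [4, 0, 2]), (-6, [2, 2, 2]), (1, [0, 4, 2])]. c * A xs) = 0"
    unfolding A_def using n
    by (intro sphere_avg_poly_fun_eq_0[of "[2]" _ 0])
      (simp_all add: fun_eq_iff poly_fun_def monomial_padded_exponent f42_def Let_def numeral_2_eq_2, algebra)
  then show "A [2, 4] = 3 * A [2, 2, 2]"
    using n shape[of "[4, 0, 2]"] shape[of "[0, 4, 2]"] by (simp add: shape_def)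
qed

lemma sphere_avg_monomial_relations_8:
  fixes r :: real
  assumes n: "3 \<le> CARD('n)"
  defines "A ys \<equiv> sphere_avg r (monomial (padded_exponent ys) :: real^'n::{finite,linorder} \<Rightarrow> real)"
  shows "A [8] = 4 * A [2, 6] + 5 * A [4, 4]" and "A [2, 6] = 5 * A [2, 2, 4]" and "A [4, 4] = 3 * A [2, 2, 4]"
    and "4 \<le> CARD('n) \<Longrightarrow> A [2, 2, 4] = 3 * A [2, 2, 2, 2]"
proof -
  have shape: "A xs = A (shape xs)" if "length xs \<le> CARD('n)" for xs
    unfolding A_def by (rule sphere_avg_eq_shape[OF that])
  have "(\<Sum>(c, xs)\<leftarrow>[(1, [8]), (-4, [6, 2]), (-10, [4, 4]), (-4, [2, 6]), (1, [0, 8])]. c * A xs) = 0"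
    unfolding A_def using n
    by (intro sphere_avg_poly_fun_eq_0[of "[]" _ 2])
      (simp_all add: fun_eq_iff poly_fun_def monomial_padded_exponent f42_def Let_def, algebra)
  then show "A [8] = 4 * A [2, 6] + 5 * A [4, 4]"
    using n shape[of "[0, 8]"] shape[of "[6, 2]"] by (simp add: shape_def)
  have "(\<Sum>(c, xs)\<leftarrow>[(1, [6, 0, 2]), (-5, [4, 2, 2]), (-5, [2, 4, 2]), (1, [0, 6, 2])]. c * A xs) = 0"
    unfolding A_def using n
    by (intro sphere_avg_poly_fun_eq_0[of "[2]" _ 1])
      (simp_all add: fun_eq_iff poly_fun_def monomial_padded_exponent f42_def Let_def numeral_2_eq_2, algebra)
  then show "A [2, 6] = 5 * A [2, 2, 4]"
    using n shape[of "[6, 0, 2]"] shape[of "[4, 2, 2]"] shape[of "[2, 4, 2]"] shape[of "[0, 6, 2]"]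
    by (simp add: shape_def)
  have "(\<Sum>(c, xs)\<leftarrow>[(1, [4, 0, 4]), (-6, [2, 2, 4]), (1, [0, 4, 4])]. c * A xs) = 0"
    unfolding A_def using n
    by (intro sphere_avg_poly_fun_eq_0[of "[4]" _ 0])
      (simp_all add: fun_eq_iff poly_fun_def monomial_padded_exponent f42_def Let_def numeral_2_eq_2, algebra)
  then show "A [4, 4] = 3 * A [2, 2, 4]"
    using n shape[of "[4, 0, 4]"] shape[of "[0, 4, 4]"] by (simp add: shape_def)
  assume n4: "4 \<le> CARD('n)"
  have "(\<Sum>(c, xs)\<leftarrow>[(1, [4, 0, 2, 2]), (-6, [2, 2, 2, 2]), (1, [0, 4, 2, 2])]. c * A xs) = 0"
    unfolding A_def using n4
    by (intro sphere_avg_poly_fun_eq_0[of "[2, 2]" _ 0])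
      (simp_all add: fun_eq_iff poly_fun_def monomial_padded_exponent f42_def Let_def numeral_2_eq_2
        numeral_3_eq_3, algebra)
  then show "A [2, 2, 4] = 3 * A [2, 2, 2, 2]"
    using n4 shape[of "[4, 0, 2, 2]"] shape[of "[0, 4, 2, 2]"] by (simp add: shape_def)
qed

lemma sphere_avg_poly_fun_shape:
  assumes "\<forall>(c, xs)\<in>set ps. length xs \<le> CARD('n)"
  shows "sphere_avg r (poly_fun ps :: real^'n::{finite,linorder} \<Rightarrow> real) =
    (\<Sum>(c, xs)\<leftarrow>ps. c * sphere_avg r (monomial (padded_exponent (shape xs)) :: real^'n::{finite,linorder} \<Rightarrow> real))"
  unfolding sphere_avg_poly_fun using assms
  by (induction ps) (auto simp: sphere_avg_eq_shape)

lemma sphere_avg_f42: "2 \<le> CARD('n) \<Longrightarrow> sphere_avg r (f42 :: real^'n::{finite,linorder} \<Rightarrow> real) = 0"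
  using sphere_avg_f42_mult_monomial_eq_0[of "[]" r 0] by simp

lemma
  fixes r :: real
  assumes n: "3 \<le> CARD('n)"
  shows sphere_avg_f63: "sphere_avg r (f63 :: real^'n::{finite,linorder} \<Rightarrow> real) = 0"
    and sphere_avg_f82: "sphere_avg r (f82 :: real^'n::{finite,linorder} \<Rightarrow> real) = 0"
    and sphere_avg_f84: "4 \<le> CARD('n) \<Longrightarrow> sphere_avg r (f84 :: real^'n::{finite,linorder} \<Rightarrow> real) = 0"
  using n sphere_avg_monomial_relations_6[OF n, of r] sphere_avg_monomial_relations_8[OF n, of r]
  by (simp_all add: poly_fun_f63 poly_fun_f82 poly_fun_f84 sphere_avg_poly_fun_shape shape_def)

lemma design_defect_poly_fun_shape:
  fixes X :: "(real^'n::{finite,linorder}) set"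
  assumes "fully_symmetric X w" and "\<forall>(c, xs)\<in>set ps. length xs \<le> CARD('n)"
  shows "design_defect X w s (poly_fun ps) = (\<Sum>(c, xs)\<leftarrow>ps. c * monomial_defect X w s (shape xs))"
  unfolding design_defect_poly_fun using assms(2)
  by (induction ps) (auto simp: monomial_defect_def design_defect_eq_monomial_defect_shape[OF assms(1)])

context
  fixes X :: "(real^'n::{finite,linorder}) set" and w :: "real^'n::{finite,linorder} \<Rightarrow> real"
  assumes fin: "finite X" and nz: "0 \<notin> X" and sym: "fully_symmetric X w"
begin

lemma moment_poly_fun:
  assumes "f = poly_fun ps" and "\<And>r. r > 0 \<Longrightarrow> sphere_avg r f = 0"
    and "\<forall>(c, xs)\<in>set ps. length xs \<le> CARD('n)"
  shows "moment X w s f = (\<Sum>(c, xs)\<leftarrow>ps. c * monomial_defect X w s (shape xs))"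
  using moment_eq_design_defect[OF fin nz assms(2)] design_defect_poly_fun_shape[OF sym assms(3)] assms(1)
  by simp

lemma moment_f42:
  assumes n: "2 \<le> CARD('n)"
  shows "moment X w s f42 = 2 * monomial_defect X w s [4] - 6 * monomial_defect X w s [2, 2]"
  using moment_poly_fun[OF poly_fun_f42[OF n] sphere_avg_f42[OF n]] n by (simp add: shape_def)

lemma moment_f63:
  assumes n: "3 \<le> CARD('n)"
  shows "moment X w s f63 =
    6 * monomial_defect X w s [6] - 90 * monomial_defect X w s [2, 4] + 180 * monomial_defect X w s [2, 2, 2]"
  using moment_poly_fun[OF poly_fun_f63[OF n] sphere_avg_f63[OF n]] n by (simp add: shape_def)

lemma moment_f82:
  assumes n: "3 \<le> CARD('n)"
  shows "moment X w s f82 =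
    2 * monomial_defect X w s [8] - 56 * monomial_defect X w s [2, 6] + 70 * monomial_defect X w s [4, 4]"
  using moment_poly_fun[OF poly_fun_f82 sphere_avg_f82[OF n]] n by (simp add: shape_def)

lemma moment_f84:
  assumes n: "4 \<le> CARD('n)"
  shows "moment X w s f84 =
    12 * monomial_defect X w s [8] - 336 * monomial_defect X w s [2, 6]
    + 2520 * monomial_defect X w s [2, 2, 4] - 3780 * monomial_defect X w s [2, 2, 2, 2]"
  using moment_poly_fun[OF poly_fun_f84[OF n] sphere_avg_f84] n by (simp add: shape_def)

end

section \<open>Solving for the monomial defects\<close>

text \<open>Eliminating g, d and c leaves a 2 x 2 system in a and b whose determinant
  u q + p v is positive.\<close>

lemma degree_8_relations_imp_zero:
  fixes N g a d c b :: real
  assumes N: "N = 3 \<or> N \<ge> 4"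
    and G: "g = - ((N - 1) * a)" and D: "d = - (a + (N - 2) * c)" and C: "3 * c = - ((N - 3) * b)"
    and m82: "2 * g - 56 * a + 70 * d = 0" and m84: "N \<ge> 4 \<Longrightarrow> 12 * g - 336 * a + 2520 * c - 3780 * b = 0"
  shows "a = 0 \<and> c = 0 \<and> (N \<ge> 4 \<longrightarrow> b = 0)"
  using N
proof
  assume "N = 3"
  with C have "c = 0"
    by simp
  with \<open>N = 3\<close> G D m82 show ?thesis
    by simp
next
  assume "N \<ge> 4"
  define p q u v where "p = 3 * (2 * N + 124)" and "q = 70 * (N - 2) * (N - 3)"
    and "u = 3 * (12 * N + 324)" and "v = 2520 * N + 3780"
  have "p * a = q * b"
    using G D C m82 unfolding p_def q_def by algebra
  moreover have "u * a = - (v * b)"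
    using G C m84[OF \<open>N \<ge> 4\<close>] unfolding u_def v_def by algebra
  ultimately have "(u * q + p * v) * b = 0"
    by algebra
  moreover have "u * q + p * v > 0"
    using \<open>N \<ge> 4\<close> unfolding p_def q_def u_def v_def by (simp add: add_nonneg_pos)
  ultimately have "b = 0"
    by simp
  with \<open>p * a = q * b\<close> C \<open>N \<ge> 4\<close> show ?thesis
    by (simp add: p_def)
qed

lemma monomial_defect_Nil:
  fixes X :: "(real^'n::{finite,linorder}) set"
  shows "monomial_defect X w s [] = 0"
proof -
  have "monomial (padded_exponent []) = (\<lambda>x::real^'n::{finite,linorder}. 1)"
    by (simp add: fun_eq_iff monomial_def padded_exponent_def)
  then show ?thesis
    by (simp add: monomial_defect_def design_defect_const)
qed

context
  fixes X :: "(real^'n::{finite,linorder}) set" and w :: "real^'n::{finite,linorder} \<Rightarrow> real"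
  assumes fin: "finite X" and nz: "0 \<notin> X" and sym: "fully_symmetric X w" and n: "3 \<le> CARD('n)"
begin

lemma monomial_defect_recurrences:
  defines "N \<equiv> real CARD('n)"
  shows "monomial_defect X w s [2] = 0"
    and "monomial_defect X w s [4] + (N - 1) * monomial_defect X w s [2, 2] = 0"
    and "monomial_defect X w s [6] + (N - 1) * monomial_defect X w s [2, 4] = monomial_defect X w (Suc s) [4]"
    and "2 * monomial_defect X w s [2, 4] + (N - 2) * monomial_defect X w s [2, 2, 2] =
      monomial_defect X w (Suc s) [2, 2]"
    and "monomial_defect X w s [8] + (N - 1) * monomial_defect X w s [2, 6] = monomial_defect X w (Suc s) [6]"
    and "monomial_defect X w s [2, 6] + monomial_defect X w s [4, 4] + (N - 2) * monomial_defect X w s [2, 2, 4] =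
      monomial_defect X w (Suc s) [2, 4]"
    and "3 * monomial_defect X w s [2, 2, 4] + (N - 3) * monomial_defect X w s [2, 2, 2, 2] =
      monomial_defect X w (Suc s) [2, 2, 2]"
proof -
  note raise = monomial_defect_raise_exponent[OF sym nz]
  have two: "monomial_defect X w s [2] = 0" for s
    using raise[of "[]" s] monomial_defect_Nil[of X w "Suc s"] n by (simp add: shape_def)
  then show "monomial_defect X w s [2] = 0" .
  show "monomial_defect X w s [4] + (N - 1) * monomial_defect X w s [2, 2] = 0"
    using raise[of "[2]" s] two[of "Suc s"] n by (simp add: shape_def N_def of_nat_diff)
  show "monomial_defect X w s [6] + (N - 1) * monomial_defect X w s [2, 4] = monomial_defect X w (Suc s) [4]"
    using raise[of "[4]" s] n by (simp add: shape_def N_def of_nat_diff)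
  show "2 * monomial_defect X w s [2, 4] + (N - 2) * monomial_defect X w s [2, 2, 2] =
      monomial_defect X w (Suc s) [2, 2]"
    using raise[of "[2, 2]" s] n by (simp add: shape_def N_def of_nat_diff)
  show "monomial_defect X w s [8] + (N - 1) * monomial_defect X w s [2, 6] = monomial_defect X w (Suc s) [6]"
    using raise[of "[6]" s] n by (simp add: shape_def N_def of_nat_diff)
  show "monomial_defect X w s [2, 6] + monomial_defect X w s [4, 4] + (N - 2) * monomial_defect X w s [2, 2, 4] =
      monomial_defect X w (Suc s) [2, 4]"
    using raise[of "[2, 4]" s] n by (simp add: shape_def N_def of_nat_diff)
  show "3 * monomial_defect X w s [2, 2, 4] + (N - 3) * monomial_defect X w s [2, 2, 2, 2] =
      monomial_defect X w (Suc s) [2, 2, 2]"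
    using raise[of "[2, 2, 2]" s] n by (simp add: shape_def N_def of_nat_diff)
qed

lemma moment_f42_eq_0_iff:
  "moment X w s f42 = 0 \<longleftrightarrow> monomial_defect X w s [4] = 0 \<and> monomial_defect X w s [2, 2] = 0"
proof -
  define N where "N = real CARD('n)"
  have "N \<ge> 3"
    using n by (simp add: N_def)
  have "monomial_defect X w s [4] = - ((N - 1) * monomial_defect X w s [2, 2])"
    using monomial_defect_recurrences(2)[of s] by (simp add: N_def eq_neg_iff_add_eq_0)
  moreover have "moment X w s f42 = 2 * monomial_defect X w s [4] - 6 * monomial_defect X w s [2, 2]"
    using moment_f42[OF fin nz sym] n by simp
  ultimately have "moment X w s f42 = - (2 * N + 4) * monomial_defect X w s [2, 2]"
    by (simp add: algebra_simps)
  with \<open>N \<ge> 3\<close> \<open>monomial_defect X w s [4] = _\<close> show ?thesis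
    by auto
qed

lemma moment_f63_eq_0_iff:
  assumes "monomial_defect X w (Suc s) [4] = 0" and "monomial_defect X w (Suc s) [2, 2] = 0"
  shows "moment X w s f63 = 0 \<longleftrightarrow>
    monomial_defect X w s [6] = 0 \<and> monomial_defect X w s [2, 4] = 0 \<and> monomial_defect X w s [2, 2, 2] = 0"
proof -
  define N where "N = real CARD('n)"
  define u a v where "u = monomial_defect X w s [6]" and "a = monomial_defect X w s [2, 4]"
    and "v = monomial_defect X w s [2, 2, 2]"
  have "N \<ge> 3"
    using n by (simp add: N_def)
  have u: "u = - ((N - 1) * a)" and a: "2 * a = - ((N - 2) * v)"
    using monomial_defect_recurrences(3,4)[of s] assms
    by (simp_all add: N_def u_def a_def v_def eq_neg_iff_add_eq_0)
  have "moment X w s f63 = 6 * u - 90 * a + 180 * v"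
    using moment_f63[OF fin nz sym n] by (simp add: u_def a_def v_def)
  also have "\<dots> = - (3 * (N - 1) + 45) * (2 * a) + 180 * v"
    unfolding u by (simp add: algebra_simps)
  also have "\<dots> = (3 * (N - 1) * (N - 2) + 45 * (N - 2) + 180) * v"
    unfolding a by (simp add: algebra_simps)
  finally have "moment X w s f63 = (3 * (N - 1) * (N - 2) + 45 * (N - 2) + 180) * v" .
  moreover have "3 * (N - 1) * (N - 2) + 45 * (N - 2) + 180 > 0"
    using \<open>N \<ge> 3\<close> by (simp add: add_pos_nonneg)
  ultimately show ?thesis
    using u a \<open>N \<ge> 3\<close> by (auto simp: u_def a_def v_def)
qed

lemma moment_f82_f84_eq_0_iff:
  assumes "monomial_defect X w (Suc s) [6] = 0" and "monomial_defect X w (Suc s) [2, 4] = 0"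
    and "monomial_defect X w (Suc s) [2, 2, 2] = 0"
  shows "moment X w s f82 = 0 \<and> (4 \<le> CARD('n) \<longrightarrow> moment X w s f84 = 0) \<longleftrightarrow>
    monomial_defect X w s [8] = 0 \<and> monomial_defect X w s [2, 6] = 0 \<and> monomial_defect X w s [4, 4] = 0 \<and>
    monomial_defect X w s [2, 2, 4] = 0 \<and> (4 \<le> CARD('n) \<longrightarrow> monomial_defect X w s [2, 2, 2, 2] = 0)"
    (is "?moments \<longleftrightarrow> ?defects")
proof -
  define N where "N = real CARD('n)"
  define g a d c b where "g = monomial_defect X w s [8]" and "a = monomial_defect X w s [2, 6]"
    and "d = monomial_defect X w s [4, 4]" and "c = monomial_defect X w s [2, 2, 4]"
    and "b = monomial_defect X w s [2, 2, 2, 2]"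
  have G: "g = - ((N - 1) * a)" and D: "d = - (a + (N - 2) * c)" and C: "3 * c = - ((N - 3) * b)"
    using monomial_defect_recurrences(5-7)[of s] assms
    by (simp_all add: N_def g_def a_def d_def c_def b_def eq_neg_iff_add_eq_0 add.assoc)
  have m82: "moment X w s f82 = 2 * g - 56 * a + 70 * d"
    using moment_f82[OF fin nz sym n] by (simp add: g_def a_def d_def)
  have m84: "moment X w s f84 = 12 * g - 336 * a + 2520 * c - 3780 * b" if "4 \<le> CARD('n)"
    using moment_f84[OF fin nz sym that] by (simp add: g_def a_def c_def b_def)
  have N: "N = 3 \<or> N \<ge> 4" and N4: "N \<ge> 4 \<longleftrightarrow> 4 \<le> CARD('n)"
    using n by (auto simp: N_def)
  have key: "a = 0 \<and> c = 0 \<and> (4 \<le> CARD('n) \<longrightarrow> b = 0)" if ?moments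
  proof -
    have "a = 0 \<and> c = 0 \<and> (N \<ge> 4 \<longrightarrow> b = 0)"
      by (rule degree_8_relations_imp_zero[OF N G D C]) (use that m82 m84 N4 in auto)
    with N4 show ?thesis
      by simp
  qed
  show ?thesis
    unfolding g_def [symmetric] a_def [symmetric] d_def [symmetric] c_def [symmetric] b_def [symmetric]
  proof
    assume ?moments
    with key G D show "g = 0 \<and> a = 0 \<and> d = 0 \<and> c = 0 \<and> (4 \<le> CARD('n) \<longrightarrow> b = 0)"
      by simp
  next
    assume "g = 0 \<and> a = 0 \<and> d = 0 \<and> c = 0 \<and> (4 \<le> CARD('n) \<longrightarrow> b = 0)"
    with m82 m84 show ?moments
      by simp
  qed
qed

lemmas monomial_defect_low_degree = monomial_defect_Nil monomial_defect_recurrences(1)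

lemma euclidean_design_3: "euclidean_design X w 3"
  by (rule euclidean_design_if_even_shapes[OF fin sym])
    (auto simp: even_shapes_le_8_def monomial_defect_low_degree)

lemma euclidean_design_5_iff: "euclidean_design X w 5 \<longleftrightarrow> moment X w 0 f42 = 0"
proof
  assume "euclidean_design X w 5"
  with n show "moment X w 0 f42 = 0"
    unfolding moment_f42_eq_0_iff by (auto intro: monomial_defect_vanishes[OF fin nz])
next
  assume "moment X w 0 f42 = 0"
  then show "euclidean_design X w 5"
    unfolding moment_f42_eq_0_iff
    by (intro euclidean_design_if_even_shapes[OF fin sym])
      (auto simp: even_shapes_le_8_def monomial_defect_low_degree)
qed

lemma euclidean_design_7_iff:
  "euclidean_design X w 7 \<longleftrightarrow> moment X w 0 f42 = 0 \<and> moment X w 1 f42 = 0 \<and> moment X w 0 f63 = 0"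
proof
  assume "euclidean_design X w 7"
  note vanish = monomial_defect_vanishes[OF fin nz this]
  with n show "moment X w 0 f42 = 0 \<and> moment X w 1 f42 = 0 \<and> moment X w 0 f63 = 0"
    by (simp add: moment_f42_eq_0_iff moment_f63_eq_0_iff)
next
  assume "moment X w 0 f42 = 0 \<and> moment X w 1 f42 = 0 \<and> moment X w 0 f63 = 0"
  then show "euclidean_design X w 7"
    using moment_f63_eq_0_iff[of 0] unfolding moment_f42_eq_0_iff
    by (intro euclidean_design_if_even_shapes[OF fin sym])
      (auto simp: even_shapes_le_8_def monomial_defect_low_degree)
qed

lemma euclidean_design_9_iff:
  "euclidean_design X w 9 \<longleftrightarrow>
    moment X w 0 f42 = 0 \<and> moment X w 1 f42 = 0 \<and> moment X w 2 f42 = 0 \<and>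
    moment X w 0 f63 = 0 \<and> moment X w 1 f63 = 0 \<and>
    moment X w 0 f82 = 0 \<and> (4 \<le> CARD('n) \<longrightarrow> moment X w 0 f84 = 0)"
    (is "_ \<longleftrightarrow> ?moments")
proof
  assume "euclidean_design X w 9"
  note vanish = monomial_defect_vanishes[OF fin nz this]
  with n show ?moments
    by (simp add: moment_f42_eq_0_iff moment_f63_eq_0_iff moment_f82_f84_eq_0_iff numeral_2_eq_2)
next
  assume H: ?moments
  then have deg4: "monomial_defect X w s [4] = 0 \<and> monomial_defect X w s [2, 2] = 0" if "s \<le> 2" for s
    using that by (auto simp: moment_f42_eq_0_iff le_Suc_eq numeral_2_eq_2)
  with H have deg6: "monomial_defect X w s [6] = 0 \<and> monomial_defect X w s [2, 4] = 0 \<and>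
      monomial_defect X w s [2, 2, 2] = 0" if "s \<le> 1" for s
    using that moment_f63_eq_0_iff[of s] by (auto simp: le_Suc_eq)
  from H deg6[of 1] have "monomial_defect X w 0 [8] = 0 \<and> monomial_defect X w 0 [2, 6] = 0 \<and>
      monomial_defect X w 0 [4, 4] = 0 \<and> monomial_defect X w 0 [2, 2, 4] = 0 \<and>
      (4 \<le> CARD('n) \<longrightarrow> monomial_defect X w 0 [2, 2, 2, 2] = 0)"
    using moment_f82_f84_eq_0_iff[of 0] by simp
  with deg4[of 0] deg6[of 0] show "euclidean_design X w 9"
    by (intro euclidean_design_if_even_shapes[OF fin sym])
      (auto simp: even_shapes_le_8_def monomial_defect_low_degree)
qed

end

theorem theorem1p6:
  fixes X :: "(real^'n::{finite,linorder}) set" and w :: "real^'n::{finite,linorder} \<Rightarrow> real"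
  assumes n3: "CARD('n) \<ge> 3"
    and fin: "finite X"
    and nz: "0 \<notin> X"
    and pos: "\<forall>x\<in>X. w x > 0"
    and sym: "fully_symmetric X w"
    and layer_const: "\<forall>x\<in>X. \<forall>y\<in>X. norm x = norm y \<longrightarrow> w x = w y"
  shows "euclidean_design X w 3
    \<and> (euclidean_design X w 5 \<longleftrightarrow> moment X w 0 f42 = 0)
    \<and> (euclidean_design X w 7 \<longleftrightarrow>
           (\<forall>s\<le>1. moment X w s f42 = 0) \<and> moment X w 0 f63 = 0)
    \<and> (euclidean_design X w 9 \<longleftrightarrow>
           (\<forall>s\<le>2. moment X w s f42 = 0) \<and> (\<forall>s\<le>1. moment X w s f63 = 0) \<and>
           moment X w 0 f82 = 0 \<and> (CARD('n) \<ge> 4 \<longrightarrow> moment X w 0 f84 = 0))"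
proof -
  have "(\<forall>s\<le>1. P s) \<longleftrightarrow> P 0 \<and> P 1" and "(\<forall>s\<le>2. P s) \<longleftrightarrow> P 0 \<and> P 1 \<and> P 2"
    for P :: "nat \<Rightarrow> bool"
    by (auto simp: le_Suc_eq numeral_2_eq_2)
  then show ?thesis
    using euclidean_design_3[OF fin nz sym n3] euclidean_design_5_iff[OF fin nz sym n3]
      euclidean_design_7_iff[OF fin nz sym n3] euclidean_design_9_iff[OF fin nz sym n3]
    by simp
qed

end
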